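(* Let $I$ be an $\mathfrak m$-primary ideal of $R$ and let $r>0$ with $\mathfrak m^r\subset I$. Then the element $I^{(m)}/A^{(m)}\in\mathbf G(X)$ is the same for all integers $m\ge r$. Denoting it by $\iota(I)$, the map $I\mapsto\iota(I)$ is a homomorphism from the semigroup $\mathbf K_{ideal}(R)$ to $\mathbf G(X)$ and thus induces a group homomorphism $\iota:\mathbf G_{ideal}(R)\to\mathbf G(X)$.
   Context: $\mathbf{k}$ is algebraically closed; $X\subset\mathbb{A}^N$ is an affine variety over $\mathbf k$ (possibly reducible) whose irreducible components $X_1,\ldots,X_r$ all have dimension $n$, containing the origin $o$; $R=\mathcal O_{X,o}$ with maximal ideal $\mathfrak m$; an ideal is $\mathfrak m$-primary if it contains a power of $\mathfrak m$. $\mathbf K_{ideal}(R)$ is the semigroup of $\mathfrak m$-primary ideals under product of ideals and $\mathbf G_{ideal}(R)$ is its Grothendieck group. For a commutative semigroup $K$, its Grothendieck group is the group of formal quotients of $K/\!\sim$ where $x\sim y$ iff $xz=yz$ for some $z\in K$. $A^{(m)}\subset R$ is the set of restrictions to $X$ of polynomials in $\mathbf k[x_1,\ldots,x_N]$ of degree $\le m$, and $I^{(m)}=A^{(m)}\cap I$. $\mathbf K(X)$ is the set of finite-dimensional $\mathbf k$-subspaces of the algebra $\mathbf k(X)$ of rational functions on $X$ with nonzero restriction to each $X_i$, two subspaces being identified if their restrictions to each $X_i$ coincide, a semigroup under $LM=\operatorname{span}\{fg\}$; $\mathbf G(X)$ is its Grothendieck group. *)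

theory Defs
  imports "HOL-Library.Poly_Mapping" "HOL-Computational_Algebra.Polynomial"
begin

type_synonym ('n, 'k) mpol = "('n \<Rightarrow>\<^sub>0 nat) \<Rightarrow>\<^sub>0 'k"

definition alg_closed_type :: "'k::field itself \<Rightarrow> bool" where
  "alg_closed_type _ \<longleftrightarrow> (\<forall>p :: 'k poly. degree p > 0 \<longrightarrow> (\<exists>x. poly p x = 0))"

definition peval :: "('n::finite, 'k::field) mpol \<Rightarrow> ('n \<Rightarrow> 'k) \<Rightarrow> 'k" where
  "peval p x = (\<Sum>a\<in>Poly_Mapping.keys p. Poly_Mapping.lookup p a * (\<Prod>i\<in>UNIV. x i ^ Poly_Mapping.lookup (a :: 'n \<Rightarrow>\<^sub>0 nat) i))"

definition tdeg :: "('n::finite, 'k::field) mpol \<Rightarrow> nat" where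
  "tdeg p = Max (insert 0 ((\<lambda>a :: 'n \<Rightarrow>\<^sub>0 nat. \<Sum>i\<in>UNIV. Poly_Mapping.lookup a i) ` Poly_Mapping.keys p))"

definition const_pol :: "'k::field \<Rightarrow> ('n::finite, 'k) mpol" where
  "const_pol c = Poly_Mapping.single 0 c"

definition origin :: "'n \<Rightarrow> 'k::field" where
  "origin = (\<lambda>_. 0)"

definition zero_set :: "('n::finite, 'k::field) mpol set \<Rightarrow> ('n \<Rightarrow> 'k) set" where
  "zero_set S = {x. \<forall>f\<in>S. peval f x = 0}"

definition zclosed :: "('n::finite \<Rightarrow> 'k::field) set \<Rightarrow> bool" where
  "zclosed Y \<longleftrightarrow> (\<exists>S. Y = zero_set S)"

definition zirred :: "('n::finite \<Rightarrow> 'k::field) set \<Rightarrow> bool" where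
  "zirred Y \<longleftrightarrow> zclosed Y \<and> Y \<noteq> {} \<and>
     (\<forall>A B. zclosed A \<longrightarrow> zclosed B \<longrightarrow> Y = A \<union> B \<longrightarrow> Y = A \<or> Y = B)"

definition zcomponent :: "('n::finite \<Rightarrow> 'k::field) set \<Rightarrow> ('n \<Rightarrow> 'k) set \<Rightarrow> bool" where
  "zcomponent X Y \<longleftrightarrow> zirred Y \<and> Y \<subseteq> X \<and> (\<forall>Z. zirred Z \<longrightarrow> Y \<subseteq> Z \<longrightarrow> Z \<subseteq> X \<longrightarrow> Z = Y)"

definition zchain :: "('n::finite \<Rightarrow> 'k::field) set \<Rightarrow> nat \<Rightarrow> bool" where
  "zchain Y d \<longleftrightarrow> (\<exists>c :: nat \<Rightarrow> ('n \<Rightarrow> 'k) set.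
      (\<forall>i\<le>d. zirred (c i)) \<and> (\<forall>i<d. c i \<subset> c (Suc i)) \<and> c d = Y)"

definition zdim_eq :: "('n::finite \<Rightarrow> 'k::field) set \<Rightarrow> nat \<Rightarrow> bool" where
  "zdim_eq Y d \<longleftrightarrow> zchain Y d \<and> \<not> zchain Y (Suc d)"

definition affine_variety_equidim :: "('n::finite \<Rightarrow> 'k::field) set \<Rightarrow> nat \<Rightarrow> bool" where
  "affine_variety_equidim X n \<longleftrightarrow> zclosed X \<and> X \<noteq> {} \<and> (\<forall>Y. zcomponent X Y \<longrightarrow> zdim_eq Y n)"

section \<open>The local ring R = O_{X,o}: elements f/g with g(o) \<noteq> 0\<close>

type_synonym ('n, 'k) frac = "('n, 'k) mpol \<times> ('n, 'k) mpol"

definition loc_elem :: "('n::finite, 'k::field) frac \<Rightarrow> bool" where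
  "loc_elem p \<longleftrightarrow> peval (snd p) origin \<noteq> 0"

definition loc_eq :: "('n::finite \<Rightarrow> 'k::field) set \<Rightarrow> ('n, 'k) frac \<Rightarrow> ('n, 'k) frac \<Rightarrow> bool" where
  "loc_eq X p q \<longleftrightarrow> (\<exists>h. peval h origin \<noteq> 0 \<and>
     (\<forall>x\<in>X. peval h x * (peval (fst p) x * peval (snd q) x - peval (fst q) x * peval (snd p) x) = 0))"

definition frac_add :: "('n::finite, 'k::field) frac \<Rightarrow> ('n, 'k) frac \<Rightarrow> ('n, 'k) frac" where
  "frac_add p q = (fst p * snd q + fst q * snd p, snd p * snd q)"

definition frac_mul :: "('n::finite, 'k::field) frac \<Rightarrow> ('n, 'k) frac \<Rightarrow> ('n, 'k) frac" where
  "frac_mul p q = (fst p * fst q, snd p * snd q)"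

definition frac_of_pol :: "('n::finite, 'k::field) mpol \<Rightarrow> ('n, 'k) frac" where
  "frac_of_pol f = (f, 1)"

text \<open>ideals of R, represented as saturated sets of representatives\<close>
definition loc_ideal :: "('n::finite \<Rightarrow> 'k::field) set \<Rightarrow> ('n, 'k) frac set \<Rightarrow> bool" where
  "loc_ideal X I \<longleftrightarrow> I \<subseteq> {p. loc_elem p} \<and> (0, 1) \<in> I \<and>
     (\<forall>p\<in>I. \<forall>q. loc_elem q \<longrightarrow> loc_eq X p q \<longrightarrow> q \<in> I) \<and>
     (\<forall>p\<in>I. \<forall>q\<in>I. frac_add p q \<in> I) \<and>
     (\<forall>p\<in>I. \<forall>a. loc_elem a \<longrightarrow> frac_mul a p \<in> I)"

definition loc_ring :: "('n::finite, 'k::field) frac set" where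
  "loc_ring = {p. loc_elem p}"

definition loc_max :: "('n::finite, 'k::field) frac set" where
  "loc_max = {p. loc_elem p \<and> peval (fst p) origin = 0}"

definition ideal_prod :: "('n::finite \<Rightarrow> 'k::field) set \<Rightarrow> ('n, 'k) frac set \<Rightarrow> ('n, 'k) frac set \<Rightarrow> ('n, 'k) frac set" where
  "ideal_prod X I J = \<Inter>{K. loc_ideal X K \<and> (\<forall>p\<in>I. \<forall>q\<in>J. frac_mul p q \<in> K)}"

primrec ideal_pow :: "('n::finite \<Rightarrow> 'k::field) set \<Rightarrow> ('n, 'k) frac set \<Rightarrow> nat \<Rightarrow> ('n, 'k) frac set" where
  "ideal_pow X I 0 = loc_ring"
| "ideal_pow X I (Suc r) = ideal_prod X (ideal_pow X I r) I"

definition m_primary :: "('n::finite \<Rightarrow> 'k::field) set \<Rightarrow> ('n, 'k) frac set \<Rightarrow> bool" where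
  "m_primary X I \<longleftrightarrow> loc_ideal X I \<and> (\<exists>r. ideal_pow X loc_max r \<subseteq> I)"

text \<open>A^{(m)} and I^{(m)} = A^{(m)} \<inter> I, as sets of polynomials representing them\<close>
definition Apol :: "nat \<Rightarrow> ('n::finite, 'k::field) mpol set" where
  "Apol m = {f. tdeg f \<le> m}"

definition Ipol :: "('n, 'k) frac set \<Rightarrow> nat \<Rightarrow> ('n::finite, 'k::field) mpol set" where
  "Ipol I m = {f. tdeg f \<le> m \<and> frac_of_pol f \<in> I}"

text \<open>f/g with g a non-zero-divisor of k[X], i.e. g not identically zero on any component\<close>
definition rat_elem :: "('n::finite \<Rightarrow> 'k::field) set \<Rightarrow> ('n, 'k) frac \<Rightarrow> bool" where
  "rat_elem X p \<longleftrightarrow> (\<forall>Y. zcomponent X Y \<longrightarrow> \<not> (\<forall>x\<in>Y. peval (snd p) x = 0))"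

text \<open>equality of f/g and f'/g' after restriction to the set Y (Y = X: equality in k(X))\<close>
definition rat_eq_on :: "('n::finite \<Rightarrow> 'k::field) set \<Rightarrow> ('n, 'k) frac \<Rightarrow> ('n, 'k) frac \<Rightarrow> bool" where
  "rat_eq_on Y p q \<longleftrightarrow> (\<forall>x\<in>Y. peval (fst p) x * peval (snd q) x = peval (fst q) x * peval (snd p) x)"

text \<open>k-subspaces of k(X), represented as saturated sets of representatives\<close>
definition rsub :: "('n::finite \<Rightarrow> 'k::field) set \<Rightarrow> ('n, 'k) frac set \<Rightarrow> bool" where
  "rsub X L \<longleftrightarrow> L \<subseteq> {p. rat_elem X p} \<and> (0, 1) \<in> L \<and>
     (\<forall>p\<in>L. \<forall>q. rat_elem X q \<longrightarrow> rat_eq_on X p q \<longrightarrow> q \<in> L) \<and>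
     (\<forall>p\<in>L. \<forall>q\<in>L. frac_add p q \<in> L) \<and>
     (\<forall>p\<in>L. \<forall>c. frac_mul (const_pol c, 1) p \<in> L)"

definition rspan :: "('n::finite \<Rightarrow> 'k::field) set \<Rightarrow> ('n, 'k) frac set \<Rightarrow> ('n, 'k) frac set" where
  "rspan X S = \<Inter>{L. rsub X L \<and> S \<subseteq> L}"

definition KX :: "('n::finite \<Rightarrow> 'k::field) set \<Rightarrow> ('n, 'k) frac set \<Rightarrow> bool" where
  "KX X L \<longleftrightarrow> rsub X L \<and> (\<exists>F. finite F \<and> F \<subseteq> L \<and> L = rspan X F) \<and>
     (\<forall>Y. zcomponent X Y \<longrightarrow> (\<exists>p\<in>L. \<not> (\<forall>x\<in>Y. peval (fst p) x = 0)))"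

definition KX_eq :: "('n::finite \<Rightarrow> 'k::field) set \<Rightarrow> ('n, 'k) frac set \<Rightarrow> ('n, 'k) frac set \<Rightarrow> bool" where
  "KX_eq X L M \<longleftrightarrow> (\<forall>Y. zcomponent X Y \<longrightarrow>
     (\<forall>p\<in>L. \<exists>q\<in>M. rat_eq_on Y p q) \<and> (\<forall>q\<in>M. \<exists>p\<in>L. rat_eq_on Y p q))"

definition KX_mul :: "('n::finite \<Rightarrow> 'k::field) set \<Rightarrow> ('n, 'k) frac set \<Rightarrow> ('n, 'k) frac set \<Rightarrow> ('n, 'k) frac set" where
  "KX_mul X L M = rspan X {frac_mul p q | p q. p \<in> L \<and> q \<in> M}"

definition rsub_of_pols :: "('n::finite \<Rightarrow> 'k::field) set \<Rightarrow> ('n, 'k) mpol set \<Rightarrow> ('n, 'k) frac set" where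
  "rsub_of_pols X P = rspan X (frac_of_pol ` P)"

text \<open>equality of formal quotients a/b = c/d in the Grothendieck group G(X):
  [a d] = [c b] in K(X)/~, i.e. a d z = c b z (in K(X)) for some z \<in> K(X)\<close>
definition GX_eq :: "('n::finite \<Rightarrow> 'k::field) set \<Rightarrow> ('n, 'k) frac set \<times> ('n, 'k) frac set
     \<Rightarrow> ('n, 'k) frac set \<times> ('n, 'k) frac set \<Rightarrow> bool" where
  "GX_eq X ab cd \<longleftrightarrow> (\<exists>z. KX X z \<and>
     KX_eq X (KX_mul X (KX_mul X (fst ab) (snd cd)) z) (KX_mul X (KX_mul X (fst cd) (snd ab)) z))"

end

theory Submission
  imports Defs "HOL-Library.Set_Algebras"
begin

text \<open>Write I^(m) = Ipol I m and A^(m) = Apol m. If m^r \<subseteq> I and r \<le> a, every monomial of degree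
  at least r lies in I, so that I^(a+b) is spanned by I^(a) A^(b); hence I^(m) A^(m') and I^(m') A^(m)
  span the same subspace of k(X), which is the independence of m.

  For the product, I^(m) J^(m) \<subseteq> (IJ)^(2m), which is spanned by (IJ)^(m) A^(m). Conversely, an
  element f of IJ satisfies e f = \<Sum> u_i w_i on X with e(o) \<noteq> 0 and u_i \<in> I, w_i \<in> J; inverting e
  up to terms of order 2r, whose monomials split into a factor in I and one in J, puts f into the span
  of I^(m) J^(m) A^(B) on X. A finite basis of (IJ)^(2m) gives one B that works after multiplication
  by A^(B), so (IJ)^(m) A^(m) A^(m) A^(B) and I^(m) J^(m) A^(m) A^(B) span the same subspace.

  All these subspaces are finite dimensional and meet every component: each component has positive
  dimension, so it contains a point y \<noteq> o, and some x_i^m \<in> I^(m) does not vanish at y.\<close>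
section \<open>Polynomials and their evaluation\<close>

definition mon_deg :: "('n::finite \<Rightarrow>\<^sub>0 nat) \<Rightarrow> nat" where
  "mon_deg a = (\<Sum>i\<in>UNIV. Poly_Mapping.lookup a i)"

definition mon_eval :: "('n::finite \<Rightarrow>\<^sub>0 nat) \<Rightarrow> ('n \<Rightarrow> 'k::field) \<Rightarrow> 'k" where
  "mon_eval a x = (\<Prod>i\<in>UNIV. x i ^ Poly_Mapping.lookup a i)"

lemma peval_eq_sum_superset:
  assumes "finite K" "Poly_Mapping.keys p \<subseteq> K"
  shows "peval p x = (\<Sum>a\<in>K. Poly_Mapping.lookup p a * mon_eval a x)"
  unfolding peval_def mon_eval_def
  by (rule sum.mono_neutral_left) (use assms in \<open>auto simp: in_keys_iff\<close>)

lemma peval_eq_sum: "peval p x = (\<Sum>a\<in>Poly_Mapping.keys p. Poly_Mapping.lookup p a * mon_eval a x)"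
  by (simp add: peval_def mon_eval_def)

lemma peval_add: "peval (p + q) x = peval p x + peval q x"
proof -
  let ?K = "Poly_Mapping.keys p \<union> Poly_Mapping.keys q"
  have "peval (p + q) x = (\<Sum>a\<in>?K. Poly_Mapping.lookup (p + q) a * mon_eval a x)"
    by (rule peval_eq_sum_superset) (auto dest: set_mp[OF keys_add])
  also have "\<dots> = (\<Sum>a\<in>?K. Poly_Mapping.lookup p a * mon_eval a x)
      + (\<Sum>a\<in>?K. Poly_Mapping.lookup q a * mon_eval a x)"
    by (simp add: lookup_add distrib_right sum.distrib)
  also have "\<dots> = peval p x + peval q x"
    by (subst (1 2) peval_eq_sum_superset[of ?K]) auto
  finally show ?thesis .
qed

lemma peval_zero [simp]: "peval 0 x = 0"
  by (simp add: peval_def)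

lemma peval_single: "peval (Poly_Mapping.single a c) x = c * mon_eval a x"
  by (simp add: peval_def mon_eval_def)

lemma peval_sum: "finite S \<Longrightarrow> peval (\<Sum>s\<in>S. f s) x = (\<Sum>s\<in>S. peval (f s) x)"
  by (induct S rule: finite_induct) (auto simp: peval_add)

lemma mon_eval_add: "mon_eval (a + b) x = mon_eval a x * mon_eval b x"
  by (simp add: mon_eval_def lookup_add power_add prod.distrib)

lemma sum_single_lookup:
  "p = (\<Sum>a\<in>Poly_Mapping.keys p. Poly_Mapping.single a (Poly_Mapping.lookup p a))"
  by (rule poly_mapping_eqI) (simp add: lookup_sum lookup_single when_def in_keys_iff)

lemma peval_single_mult: "peval (Poly_Mapping.single a c * q) x = c * mon_eval a x * peval q x"
proof -
  have "Poly_Mapping.single a c * q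
      = (\<Sum>b\<in>Poly_Mapping.keys q. Poly_Mapping.single a c * Poly_Mapping.single b (Poly_Mapping.lookup q b))"
    by (subst sum_single_lookup[of q]) (simp add: sum_distrib_left)
  then have "peval (Poly_Mapping.single a c * q) x
      = (\<Sum>b\<in>Poly_Mapping.keys q. c * mon_eval a x * (Poly_Mapping.lookup q b * mon_eval b x))"
    by (simp add: peval_sum mult_single peval_single mon_eval_add mult_ac)
  also have "\<dots> = c * mon_eval a x * peval q x"
    by (simp add: peval_eq_sum sum_distrib_left)
  finally show ?thesis .
qed

lemma peval_mult: "peval (p * q) x = peval p x * peval q x"
proof -
  have "p * q = (\<Sum>a\<in>Poly_Mapping.keys p. Poly_Mapping.single a (Poly_Mapping.lookup p a) * q)"
    by (subst sum_single_lookup[of p]) (simp add: sum_distrib_right)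
  then have "peval (p * q) x
      = (\<Sum>a\<in>Poly_Mapping.keys p. peval (Poly_Mapping.single a (Poly_Mapping.lookup p a) * q) x)"
    by (simp add: peval_sum)
  also have "\<dots> = peval p x * peval q x"
    unfolding peval_single_mult by (simp add: peval_eq_sum sum_distrib_right)
  finally show ?thesis .
qed

lemma peval_const [simp]: "peval (const_pol c) x = c"
  by (simp add: const_pol_def peval_single mon_eval_def)

lemma const_pol_one [simp]: "const_pol 1 = 1"
  by (simp add: const_pol_def)

lemma peval_one [simp]: "peval 1 x = 1"
  using peval_const[of 1 x] by simp

lemma peval_uminus: "peval (- p) x = - peval p x"
  using peval_add[of p "- p" x] by (simp add: eq_neg_iff_add_eq_0 add.commute)

lemma peval_diff: "peval (p - q) x = peval p x - peval q x"
  using peval_add[of p "- q" x] by (simp add: peval_uminus)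

lemma const_pol_mult: "const_pol a * const_pol b = const_pol (a * b)"
  by (simp add: const_pol_def mult_single)

lemma const_pol_add: "const_pol (a + b) = const_pol a + const_pol b"
  by (simp add: const_pol_def single_add)

lemma const_pol_neg_one_mult: "const_pol (- 1) * p = - p"
proof -
  have "const_pol (- 1) * p + p = (const_pol (- 1) + const_pol 1) * p"
    by (simp add: distrib_right)
  also have "\<dots> = 0"
    by (simp only: const_pol_add[symmetric]) (simp add: const_pol_def)
  finally show ?thesis
    by (simp add: eq_neg_iff_add_eq_0)
qed

lemma lookup_const_pol_mult: "Poly_Mapping.lookup (const_pol c * p) a = c * Poly_Mapping.lookup p a"
  by (simp add: const_pol_def mult_map_scale_conv_mult[symmetric] Poly_Mapping.map.rep_eq when_def)

lemma mon_eval_origin: "mon_eval a origin = (if a = 0 then 1 else 0)"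
proof (cases "a = 0")
  case False
  then obtain i where "Poly_Mapping.lookup a i \<noteq> 0"
    by (auto simp: poly_mapping_eq_iff fun_eq_iff)
  then show ?thesis
    using False by (auto simp: mon_eval_def origin_def zero_power intro!: prod_zero)
qed (simp add: mon_eval_def)

lemma peval_origin: "peval p origin = Poly_Mapping.lookup p 0"
proof -
  have "peval p origin
      = (\<Sum>a\<in>insert 0 (Poly_Mapping.keys p). Poly_Mapping.lookup p a * mon_eval a origin)"
    by (rule peval_eq_sum_superset) auto
  also have "\<dots> = Poly_Mapping.lookup p 0"
    by (simp add: mon_eval_origin if_distrib sum.If_cases cong: if_cong)
  finally show ?thesis .
qed

lemma peval_single_single: "peval (Poly_Mapping.single (Poly_Mapping.single i k) 1) x = x i ^ k"
  by (simp add: peval_single mon_eval_def lookup_single when_def if_distrib cong: if_cong)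

lemma mon_deg_add: "mon_deg (a + b) = mon_deg a + mon_deg b"
  by (simp add: mon_deg_def lookup_add sum.distrib)

lemma mon_deg_eq_0_iff: "mon_deg a = 0 \<longleftrightarrow> a = 0"
  by (auto simp: mon_deg_def poly_mapping_eq_iff fun_eq_iff)

lemma mon_deg_single: "mon_deg (Poly_Mapping.single i k) = k"
  by (simp add: mon_deg_def lookup_single when_def)

lemma lookup_le_mon_deg: "Poly_Mapping.lookup a i \<le> mon_deg a"
  unfolding mon_deg_def by (rule member_le_sum) auto

lemma single_add_minus_single:
  fixes a :: "'n \<Rightarrow>\<^sub>0 nat"
  assumes "k \<le> Poly_Mapping.lookup a i"
  shows "a = (a - Poly_Mapping.single i k) + Poly_Mapping.single i k"
proof (rule poly_mapping_eqI)
  fix j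
  show "Poly_Mapping.lookup a j = Poly_Mapping.lookup (a - Poly_Mapping.single i k + Poly_Mapping.single i k) j"
    by (cases "j = i") (use assms in \<open>simp_all add: lookup_add lookup_minus lookup_single_not_eq\<close>)
qed

lemma mon_deg_split:
  assumes "k \<le> mon_deg a"
  obtains b c where "a = b + c" "mon_deg b = k"
  using assms
proof (induct k arbitrary: thesis)
  case 0
  then show ?case by (metis add_0 mon_deg_eq_0_iff)
next
  case (Suc k)
  then obtain b c where bc: "a = b + c" "mon_deg b = k"
    by (metis Suc_leD)
  then have "0 < mon_deg c"
    using Suc.prems(2) by (simp add: mon_deg_add)
  then obtain i where i: "1 \<le> Poly_Mapping.lookup c i"
    unfolding mon_deg_def by (metis One_nat_def Suc_leI gr0I sum.neutral)
  let ?c' = "c - Poly_Mapping.single i 1"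
  have "a = (b + Poly_Mapping.single i 1) + ?c'"
    using bc(1) single_add_minus_single[OF i] by (metis add.assoc add.commute)
  moreover have "mon_deg (b + Poly_Mapping.single i 1) = Suc k"
    using bc(2) by (simp add: mon_deg_add mon_deg_single)
  ultimately show ?case
    using Suc.prems(1) by blast
qed

lemma finite_mon_deg_le: "finite {a :: 'n::finite \<Rightarrow>\<^sub>0 nat. mon_deg a \<le> d}"
proof -
  let ?S = "{f :: 'n \<Rightarrow> nat. \<forall>x. (x \<in> UNIV \<longrightarrow> f x \<in> {..d}) \<and> (x \<notin> UNIV \<longrightarrow> f x = 0)}"
  have "Poly_Mapping.lookup ` {a. mon_deg a \<le> d} \<subseteq> ?S"
    using lookup_le_mon_deg order_trans by fastforce
  then have "finite (Poly_Mapping.lookup ` {a :: 'n \<Rightarrow>\<^sub>0 nat. mon_deg a \<le> d})"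
    by (rule finite_subset) (rule finite_set_of_finite_funs; simp)
  moreover have "inj_on Poly_Mapping.lookup {a :: 'n \<Rightarrow>\<^sub>0 nat. mon_deg a \<le> d}"
    by (rule inj_onI, rule poly_mapping_eqI) simp
  ultimately show ?thesis
    by (rule finite_imageD)
qed

lemma exists_large_exponent:
  fixes a :: "'n::finite \<Rightarrow>\<^sub>0 nat"
  assumes "k * card (UNIV :: 'n set) < mon_deg a"
  obtains i where "k \<le> Poly_Mapping.lookup a i"
proof (rule ccontr)
  assume "\<not> thesis"
  with that have "\<forall>i. Poly_Mapping.lookup a i \<le> k"
    by (meson nat_le_linear)
  then have "mon_deg a \<le> (\<Sum>i\<in>(UNIV::'n set). k)"
    unfolding mon_deg_def by (intro sum_mono) auto
  with assms show False
    by (simp add: mult.commute)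
qed

lemma tdeg_le_iff: "tdeg p \<le> m \<longleftrightarrow> (\<forall>a\<in>Poly_Mapping.keys p. mon_deg a \<le> m)"
  by (simp add: tdeg_def mon_deg_def)

lemma mon_deg_le_tdeg: "a \<in> Poly_Mapping.keys p \<Longrightarrow> mon_deg a \<le> tdeg p"
  using tdeg_le_iff[of p "tdeg p"] by blast

lemma tdeg_add_le: "tdeg (p + q) \<le> max (tdeg p) (tdeg q)"
  unfolding tdeg_le_iff using keys_add mon_deg_le_tdeg by (fastforce simp: le_max_iff_disj)

lemma tdeg_mult_le: "tdeg (p * q) \<le> tdeg p + tdeg q"
  unfolding tdeg_le_iff
proof
  fix a assume "a \<in> Poly_Mapping.keys (p * q)"
  then obtain b c where "a = b + c" "b \<in> Poly_Mapping.keys p" "c \<in> Poly_Mapping.keys q"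
    using keys_mult by blast
  then show "mon_deg a \<le> tdeg p + tdeg q"
    by (simp add: mon_deg_add add_mono mon_deg_le_tdeg)
qed

lemma tdeg_add_le_bound: "tdeg p \<le> m \<Longrightarrow> tdeg q \<le> m \<Longrightarrow> tdeg (p + q) \<le> m"
  using tdeg_add_le[of p q] by simp

lemma tdeg_mult_le_add: "tdeg p \<le> a \<Longrightarrow> tdeg q \<le> b \<Longrightarrow> tdeg (p * q) \<le> a + b"
  using tdeg_mult_le[of p q] by linarith

lemma tdeg_single_le: "tdeg (Poly_Mapping.single a c) \<le> mon_deg a"
  unfolding tdeg_le_iff by auto

lemma tdeg_const_pol: "tdeg (const_pol c) = 0"
  using tdeg_single_le[of 0 c] by (simp add: const_pol_def mon_deg_def)

lemma tdeg_one [simp]: "tdeg 1 = 0"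
  using tdeg_const_pol[of 1] by simp

lemma tdeg_const_pol_mult_le: "tdeg (const_pol c * p) \<le> tdeg p"
  using tdeg_mult_le[of "const_pol c" p] by (simp add: tdeg_const_pol)

definition order_ge :: "nat \<Rightarrow> ('n::finite, 'k::field) mpol \<Rightarrow> bool" where
  "order_ge N p \<longleftrightarrow> (\<forall>a\<in>Poly_Mapping.keys p. N \<le> mon_deg a)"

lemma order_ge_mult: "order_ge M p \<Longrightarrow> order_ge N q \<Longrightarrow> order_ge (M + N) (p * q)"
  unfolding order_ge_def using keys_mult by (fastforce simp: mon_deg_add add_mono)

lemma order_ge_power: "order_ge 1 t \<Longrightarrow> order_ge N (t ^ N)"
proof (induct N)
  case (Suc N)
  then show ?case using order_ge_mult[of 1 t N "t ^ N"] by simp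
qed (simp add: order_ge_def)

lemma order_ge_uminus [simp]: "order_ge N (- p) \<longleftrightarrow> order_ge N p"
  by (simp add: order_ge_def)

section \<open>Linear combinations\<close>

inductive_set lin_comb :: "('n::finite, 'k::field) mpol set \<Rightarrow> ('n, 'k) mpol set" for P where
  lin_comb_zero: "0 \<in> lin_comb P"
| lin_comb_step: "p \<in> P \<Longrightarrow> q \<in> lin_comb P \<Longrightarrow> const_pol c * p + q \<in> lin_comb P"

lemma lin_comb_base: "p \<in> P \<Longrightarrow> p \<in> lin_comb P"
  using lin_comb_step[OF _ lin_comb_zero, of p P 1] by simp

lemma lin_comb_add: "p \<in> lin_comb P \<Longrightarrow> q \<in> lin_comb P \<Longrightarrow> p + q \<in> lin_comb P"
  by (induct p rule: lin_comb.induct) (auto simp: add.assoc intro: lin_comb_step)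

lemma lin_comb_smult: "p \<in> lin_comb P \<Longrightarrow> const_pol c * p \<in> lin_comb P"
proof (induct p rule: lin_comb.induct)
  case (lin_comb_step p q d)
  have "const_pol c * (const_pol d * p + q) = const_pol (c * d) * p + const_pol c * q"
    by (simp add: algebra_simps const_pol_mult[symmetric])
  then show ?case
    using lin_comb_step lin_comb.lin_comb_step by metis
qed (simp add: lin_comb_zero)

lemma lin_comb_diff: "p \<in> lin_comb P \<Longrightarrow> q \<in> lin_comb P \<Longrightarrow> p - q \<in> lin_comb P"
  using lin_comb_add[of p P "- q"] lin_comb_smult[of q P "- 1"] by (simp add: const_pol_neg_one_mult)

lemma lin_comb_sum: "finite S \<Longrightarrow> (\<And>s. s \<in> S \<Longrightarrow> f s \<in> lin_comb P) \<Longrightarrow> (\<Sum>s\<in>S. f s) \<in> lin_comb P"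
  by (induct S rule: finite_induct) (auto intro: lin_comb_zero lin_comb_add)

lemma lin_comb_subset:
  assumes "Q \<subseteq> lin_comb P"
  shows "lin_comb Q \<subseteq> lin_comb P"
proof
  fix p assume "p \<in> lin_comb Q"
  then show "p \<in> lin_comb P"
    by induct (use assms in \<open>auto intro: lin_comb_zero lin_comb_add lin_comb_smult\<close>)
qed

lemma lin_comb_mono: "P \<subseteq> Q \<Longrightarrow> lin_comb P \<subseteq> lin_comb Q"
  using lin_comb_subset lin_comb_base by blast

lemma lin_comb_mult: "p \<in> lin_comb P \<Longrightarrow> q \<in> lin_comb Q \<Longrightarrow> p * q \<in> lin_comb (P * Q)"
proof (induct p rule: lin_comb.induct)
  case (lin_comb_step p r c)
  from lin_comb_step.prems have "p * q \<in> lin_comb (P * Q)"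
  proof (induct q rule: lin_comb.induct)
    case (lin_comb_step q s d)
    have "p * (const_pol d * q + s) = const_pol d * (p * q) + p * s"
      by (simp add: algebra_simps)
    then show ?case
      using lin_comb_step \<open>p \<in> P\<close> by (metis lin_comb.lin_comb_step set_times_intro)
  qed (simp add: lin_comb_zero)
  moreover have "(const_pol c * p + r) * q = const_pol c * (p * q) + r * q"
    by (simp add: algebra_simps)
  ultimately show ?case
    using lin_comb_step lin_comb_smult lin_comb_add by metis
qed (simp add: lin_comb_zero)

definition span_on :: "('n::finite \<Rightarrow> 'k::field) set \<Rightarrow> ('n, 'k) mpol set \<Rightarrow> ('n, 'k) mpol set" where
  "span_on X Q = {p. \<exists>f\<in>lin_comb Q. \<forall>x\<in>X. peval p x = peval f x}"

lemma lin_comb_subset_span_on: "lin_comb Q \<subseteq> span_on X Q"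
  by (auto simp: span_on_def)

lemma span_on_subset:
  assumes "Q \<subseteq> span_on X P"
  shows "lin_comb Q \<subseteq> span_on X P"
proof
  fix p assume "p \<in> lin_comb Q"
  then show "p \<in> span_on X P"
  proof (induct p rule: lin_comb.induct)
    case lin_comb_zero
    then show ?case using lin_comb_subset_span_on lin_comb.lin_comb_zero by blast
  next
    case (lin_comb_step p q c)
    obtain f g where f: "f \<in> lin_comb P" "\<forall>x\<in>X. peval p x = peval f x"
      and g: "g \<in> lin_comb P" "\<forall>x\<in>X. peval q x = peval g x"
      using assms lin_comb_step by (auto simp: span_on_def)
    have "const_pol c * f + g \<in> lin_comb P"
      using f g by (intro lin_comb_add lin_comb_smult)
    moreover have "\<forall>x\<in>X. peval (const_pol c * p + q) x = peval (const_pol c * f + g) x"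
      using f g by (simp add: peval_add peval_mult)
    ultimately show ?case
      unfolding span_on_def by blast
  qed
qed

lemma span_on_mono: "P \<subseteq> Q \<Longrightarrow> span_on X P \<subseteq> span_on X Q"
  unfolding span_on_def using lin_comb_mono by blast

lemma span_on_mult: "g \<in> span_on X P \<Longrightarrow> h \<in> lin_comb Q \<Longrightarrow> g * h \<in> span_on X (P * Q)"
proof -
  assume "g \<in> span_on X P" "h \<in> lin_comb Q"
  then obtain f where "f \<in> lin_comb P" "\<forall>x\<in>X. peval g x = peval f x"
    by (auto simp: span_on_def)
  with \<open>h \<in> lin_comb Q\<close> show ?thesis
    unfolding span_on_def by (auto simp: peval_mult intro!: bexI[of _ "f * h"] lin_comb_mult)
qed

lemma span_on_sum:
  "finite S \<Longrightarrow> (\<And>s. s \<in> S \<Longrightarrow> g s \<in> span_on X Q) \<Longrightarrow> (\<Sum>s\<in>S. g s) \<in> span_on X Q"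
  using span_on_subset[of "g ` S" X Q] lin_comb_sum[of S g "g ` S"] lin_comb_base by blast

definition lin_closed :: "('n::finite, 'k::field) mpol set \<Rightarrow> bool" where
  "lin_closed P \<longleftrightarrow> (\<forall>p\<in>P. \<forall>q\<in>P. p + q \<in> P) \<and> (\<forall>p\<in>P. \<forall>c. const_pol c * p \<in> P)"

lemma lin_closed_coeff_zero:
  "lin_closed P \<Longrightarrow> lin_closed {p \<in> P. Poly_Mapping.lookup p a = 0}"
  unfolding lin_closed_def by (simp add: lookup_add lookup_const_pol_mult)

lemma lin_closed_pivot:
  assumes P: "lin_closed P" and p1: "p1 \<in> P" "Poly_Mapping.lookup p1 a = 1"
    and F: "{p \<in> P. Poly_Mapping.lookup p a = 0} \<subseteq> lin_comb F"
  shows "P \<subseteq> lin_comb (insert p1 F)"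
proof
  fix p assume p: "p \<in> P"
  define c where "c = Poly_Mapping.lookup p a"
  define p' where "p' = const_pol (- c) * p1 + p"
  have "p' \<in> P"
    using P p p1(1) unfolding p'_def lin_closed_def by blast
  moreover have "Poly_Mapping.lookup p' a = 0"
    using p1(2) by (simp add: p'_def c_def lookup_add lookup_const_pol_mult)
  ultimately have "p' \<in> lin_comb (insert p1 F)"
    using F lin_comb_mono[of F "insert p1 F"] by blast
  then have "const_pol c * p1 + p' \<in> lin_comb (insert p1 F)"
    by (intro lin_comb_step) simp_all
  moreover have "const_pol c * p1 + p' = (const_pol c + const_pol (- c)) * p1 + p"
    by (simp add: p'_def distrib_right add.assoc)
  moreover have "const_pol c + const_pol (- c) = 0"
    by (simp add: const_pol_def single_add[symmetric])
  ultimately show "p \<in> lin_comb (insert p1 F)"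
    by (metis add.left_neutral mult_zero_left)
qed

lemma lin_closed_finite_spanning_set:
  assumes "finite M" "lin_closed P" "\<forall>p\<in>P. Poly_Mapping.keys p \<subseteq> M"
  shows "\<exists>F. finite F \<and> F \<subseteq> P \<and> P \<subseteq> lin_comb F"
  using assms
proof (induct M arbitrary: P rule: finite_induct)
  case empty
  then have "P \<subseteq> lin_comb {}"
    using lin_comb_zero by fastforce
  then show ?case by blast
next
  case (insert a M)
  let ?P' = "{p \<in> P. Poly_Mapping.lookup p a = 0}"
  have "\<forall>p\<in>?P'. Poly_Mapping.keys p \<subseteq> M"
  proof (intro ballI subsetI)
    fix p x assume p: "p \<in> ?P'" and x: "x \<in> Poly_Mapping.keys p"
    then have "x \<in> insert a M"
      using insert.prems(2) by blast
    moreover have "x \<noteq> a"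
      using p x by (auto simp: in_keys_iff)
    ultimately show "x \<in> M" by simp
  qed
  from insert.hyps(3)[OF lin_closed_coeff_zero[OF insert.prems(1)] this]
  obtain F where F: "finite F" "F \<subseteq> ?P'" "?P' \<subseteq> lin_comb F"
    by (elim exE conjE)
  show ?case
  proof (cases "\<exists>p0\<in>P. Poly_Mapping.lookup p0 a \<noteq> 0")
    case False
    then show ?thesis
      using F by (intro exI[of _ F]) auto
  next
    case True
    then obtain p0 where p0: "p0 \<in> P" "Poly_Mapping.lookup p0 a \<noteq> 0" by blast
    define p1 where "p1 = const_pol (1 / Poly_Mapping.lookup p0 a) * p0"
    have p1: "p1 \<in> P" "Poly_Mapping.lookup p1 a = 1"
      using p0 insert.prems(1) by (simp_all add: p1_def lin_closed_def lookup_const_pol_mult)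
    then show ?thesis
      using F lin_closed_pivot[OF insert.prems(1) p1 F(3)] by (intro exI[of _ "insert p1 F"]) auto
  qed
qed

lemma lin_closed_bounded_finite_spanning_set:
  assumes "lin_closed P" "\<forall>p\<in>P. tdeg p \<le> d"
  shows "\<exists>F. finite F \<and> F \<subseteq> P \<and> P \<subseteq> lin_comb F"
proof (rule lin_closed_finite_spanning_set[OF finite_mon_deg_le assms(1)])
  show "\<forall>p\<in>P. Poly_Mapping.keys p \<subseteq> {a. mon_deg a \<le> d}"
    using assms(2) by (auto simp: tdeg_le_iff)
qed

section \<open>Zariski topology\<close>

lemma zero_set_Un: "zero_set (S \<union> T) = zero_set S \<inter> zero_set T"
  unfolding zero_set_def by auto

lemma zclosed_Int: "zclosed A \<Longrightarrow> zclosed B \<Longrightarrow> zclosed (A \<inter> B)"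
  unfolding zclosed_def using zero_set_Un by metis

lemma zclosed_vanishing_set: "zclosed {x. peval f x = 0}"
  unfolding zclosed_def zero_set_def by (rule exI[of _ "{f}"]) auto

definition zirreducible :: "('n::finite \<Rightarrow> 'k::field) set \<Rightarrow> bool" where
  "zirreducible S \<longleftrightarrow> S \<noteq> {} \<and>
     (\<forall>A B. zclosed A \<longrightarrow> zclosed B \<longrightarrow> S \<subseteq> A \<union> B \<longrightarrow> S \<subseteq> A \<or> S \<subseteq> B)"

lemma zirred_iff: "zirred Y \<longleftrightarrow> zclosed Y \<and> zirreducible Y"
proof
  assume Y: "zirred Y"
  have "Y \<subseteq> A \<or> Y \<subseteq> B" if A: "zclosed A" and B: "zclosed B" and cover: "Y \<subseteq> A \<union> B" for A B
  proof -
    have "zclosed (Y \<inter> A)" "zclosed (Y \<inter> B)"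
      using Y A B zclosed_Int by (auto simp: zirred_def)
    moreover have "Y = (Y \<inter> A) \<union> (Y \<inter> B)"
      using cover by blast
    ultimately have "Y = Y \<inter> A \<or> Y = Y \<inter> B"
      using Y unfolding zirred_def by blast
    then show ?thesis by blast
  qed
  then show "zclosed Y \<and> zirreducible Y"
    using Y by (simp add: zirred_def zirreducible_def)
next
  assume "zclosed Y \<and> zirreducible Y"
  then show "zirred Y"
    unfolding zirreducible_def zirred_def by (metis Un_upper1 Un_upper2 equalityI order_refl)
qed

definition zclosure :: "('n::finite \<Rightarrow> 'k::field) set \<Rightarrow> ('n \<Rightarrow> 'k) set" where
  "zclosure S = zero_set {f. \<forall>y\<in>S. peval f y = 0}"

lemma subset_zclosure: "S \<subseteq> zclosure S"
  unfolding zclosure_def zero_set_def by auto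

lemma zclosed_zclosure: "zclosed (zclosure S)"
  unfolding zclosure_def zclosed_def by blast

lemma zclosure_minimal: "zclosed C \<Longrightarrow> S \<subseteq> C \<Longrightarrow> zclosure S \<subseteq> C"
  unfolding zclosure_def zclosed_def zero_set_def by blast

lemma zirreducible_zclosure:
  assumes "zirreducible S"
  shows "zirreducible (zclosure S)"
  unfolding zirreducible_def
proof (intro conjI allI impI)
  show "zclosure S \<noteq> {}"
    using assms subset_zclosure by (fastforce simp: zirreducible_def)
  fix A B assume "zclosed A" "zclosed B" "zclosure S \<subseteq> A \<union> B"
  then have "S \<subseteq> A \<or> S \<subseteq> B"
    using assms subset_zclosure unfolding zirreducible_def by blast
  then show "zclosure S \<subseteq> A \<or> zclosure S \<subseteq> B"
    using zclosure_minimal \<open>zclosed A\<close> \<open>zclosed B\<close> by blast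
qed

lemma zirreducible_chain_Union:
  assumes chain: "subset.chain UNIV C" and C: "\<And>c. c \<in> C \<Longrightarrow> zirreducible c \<and> x \<in> c"
  shows "zirreducible (insert x (\<Union>C))"
  unfolding zirreducible_def
proof (intro conjI allI impI)
  fix A B assume A: "zclosed A" and B: "zclosed B" and cover: "insert x (\<Union>C) \<subseteq> A \<union> B"
  have split: "c \<subseteq> A \<or> c \<subseteq> B" if "c \<in> C" for c
  proof -
    have "c \<subseteq> A \<union> B" using cover that by blast
    then show ?thesis using C[OF that] A B unfolding zirreducible_def by blast
  qed
  show "insert x (\<Union>C) \<subseteq> A \<or> insert x (\<Union>C) \<subseteq> B"
  proof (cases "\<forall>c\<in>C. c \<subseteq> A")
    case True
    show ?thesis
    proof (cases "x \<in> A")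
      case False
      then have "C = {}" using True C by blast
      then show ?thesis using cover by blast
    qed (use True in blast)
  next
    case False
    then obtain c1 where c1: "c1 \<in> C" "\<not> c1 \<subseteq> A" by blast
    then have c1B: "c1 \<subseteq> B"
      using split by blast
    have "c \<subseteq> B" if "c \<in> C" for c
    proof -
      have "c \<subseteq> c1 \<or> c1 \<subseteq> c"
        using chain that c1(1) unfolding subset.chain_def by blast
      then show ?thesis
        using split[OF that] c1 c1B by blast
    qed
    moreover have "x \<in> B"
      using C[OF c1(1)] c1B by blast
    ultimately show ?thesis by blast
  qed
qed simp

lemma zcomponent_exists:
  assumes X: "zclosed X" and x: "x \<in> X"
  obtains Y where "zcomponent X Y" "x \<in> Y"
proof -
  let ?A = "{Y. zirred Y \<and> x \<in> Y \<and> Y \<subseteq> X}"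
  have "\<exists>M\<in>?A. \<forall>Z\<in>?A. M \<subseteq> Z \<longrightarrow> Z = M"
  proof (rule Zorn_Lemma2, intro ballI)
    fix C assume "C \<in> chains ?A"
    then have CA: "C \<subseteq> ?A" and "chain\<^sub>\<subseteq> C"
      unfolding chains_def by auto
    then have chain: "subset.chain UNIV C"
      unfolding subset.chain_def chain_subset_def by auto
    let ?U = "zclosure (insert x (\<Union>C))"
    have "zirreducible (insert x (\<Union>C))"
      using CA by (intro zirreducible_chain_Union[OF chain]) (auto simp: zirred_iff)
    then have "zirred ?U"
      by (simp add: zirred_iff zclosed_zclosure zirreducible_zclosure)
    moreover have "?U \<subseteq> X"
      using CA x by (intro zclosure_minimal[OF X]) auto
    moreover have "x \<in> ?U"
      using subset_zclosure[of "insert x (\<Union>C)"] by auto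
    ultimately have "?U \<in> ?A" by simp
    moreover have "\<forall>Z\<in>C. Z \<subseteq> ?U"
      using subset_zclosure[of "insert x (\<Union>C)"] by auto
    ultimately show "\<exists>U\<in>?A. \<forall>Z\<in>C. Z \<subseteq> U" by blast
  qed
  then obtain M where M: "M \<in> ?A" "\<forall>Z\<in>?A. M \<subseteq> Z \<longrightarrow> Z = M" by auto
  have "zcomponent X M" unfolding zcomponent_def
  proof (intro conjI allI impI)
    show "zirred M" "M \<subseteq> X" using M by auto
    fix Z assume "zirred Z" "M \<subseteq> Z" "Z \<subseteq> X"
    then show "Z = M" using M by auto
  qed
  then show ?thesis
    using that M by auto
qed
lemma zirred_vanishing_product:
  assumes "zirred Y" "\<forall>y\<in>Y. peval g y * peval h y = 0" "\<not> (\<forall>y\<in>Y. peval g y = 0)"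
  shows "\<forall>y\<in>Y. peval h y = 0"
proof -
  have "Y \<subseteq> {y. peval g y = 0} \<union> {y. peval h y = 0}"
    using assms(2) by auto
  then show ?thesis
    using assms(1,3) zclosed_vanishing_set unfolding zirred_iff zirreducible_def by blast
qed

definition nonzero_on_components :: "('n::finite \<Rightarrow> 'k::field) set \<Rightarrow> ('n, 'k) mpol \<Rightarrow> bool" where
  "nonzero_on_components X g \<longleftrightarrow> (\<forall>Y. zcomponent X Y \<longrightarrow> \<not> (\<forall>y\<in>Y. peval g y = 0))"

lemma nonzero_on_components_mult:
  "nonzero_on_components X g \<Longrightarrow> nonzero_on_components X h \<Longrightarrow> nonzero_on_components X (g * h)"
  unfolding nonzero_on_components_def
proof (intro allI impI notI)
  fix Y assume g: "\<forall>Y. zcomponent X Y \<longrightarrow> \<not> (\<forall>y\<in>Y. peval g y = 0)"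
    and h: "\<forall>Y. zcomponent X Y \<longrightarrow> \<not> (\<forall>y\<in>Y. peval h y = 0)"
    and Y: "zcomponent X Y" and gh: "\<forall>y\<in>Y. peval (g * h) y = 0"
  have "\<forall>y\<in>Y. peval h y = 0"
    by (rule zirred_vanishing_product) (use Y g gh in \<open>auto simp: zcomponent_def peval_mult\<close>)
  then show False using h Y by blast
qed

lemma nonzero_on_components_one: "nonzero_on_components X 1"
  unfolding nonzero_on_components_def zcomponent_def zirred_def by auto

lemma nonzero_on_components_cancel:
  assumes "zclosed X" "nonzero_on_components X g" "\<forall>x\<in>X. peval g x * peval h x = 0" "x \<in> X"
  shows "peval h x = 0"
proof -
  obtain Y where Y: "zcomponent X Y" "x \<in> Y"
    using zcomponent_exists assms(1,4) by blast
  then have "\<forall>y\<in>Y. peval h y = 0"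
    using assms(2,3) zirred_vanishing_product[of Y g h]
    by (auto simp: zcomponent_def nonzero_on_components_def)
  then show ?thesis using Y by blast
qed

lemma rat_elem_iff: "rat_elem X p \<longleftrightarrow> nonzero_on_components X (snd p)"
  by (simp add: rat_elem_def nonzero_on_components_def)

lemma rat_elem_frac_add: "rat_elem X p \<Longrightarrow> rat_elem X q \<Longrightarrow> rat_elem X (frac_add p q)"
  by (simp add: rat_elem_iff frac_add_def nonzero_on_components_mult)

lemma rat_elem_frac_mul: "rat_elem X p \<Longrightarrow> rat_elem X q \<Longrightarrow> rat_elem X (frac_mul p q)"
  by (simp add: rat_elem_iff frac_mul_def nonzero_on_components_mult)

lemma rat_elem_pol: "rat_elem X (f, 1)"
  by (simp add: rat_elem_iff nonzero_on_components_one)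

section \<open>Subspaces of k(X) spanned by polynomials\<close>

definition pol_span :: "('n::finite \<Rightarrow> 'k::field) set \<Rightarrow> ('n, 'k) mpol set \<Rightarrow> ('n, 'k) frac set" where
  "pol_span X P = {q. rat_elem X q \<and> (\<exists>f\<in>lin_comb P. rat_eq_on X (f, 1) q)}"

lemma rat_eq_on_pol: "rat_eq_on X (f, 1) q \<longleftrightarrow> (\<forall>x\<in>X. peval f x * peval (snd q) x = peval (fst q) x)"
  by (simp add: rat_eq_on_def)

lemma pol_span_saturated:
  assumes X: "zclosed X" and p: "p \<in> pol_span X P" and q: "rat_elem X q" and pq: "rat_eq_on X p q"
  shows "q \<in> pol_span X P"
proof -
  obtain f where f: "f \<in> lin_comb P" "\<forall>x\<in>X. peval f x * peval (snd p) x = peval (fst p) x"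
    and p': "rat_elem X p"
    using p by (auto simp: pol_span_def rat_eq_on_pol)
  have "peval (snd p) x * peval (f * snd q - fst q) x = 0" if "x \<in> X" for x
  proof -
    have "peval (snd p) x * peval (f * snd q - fst q) x
        = (peval f x * peval (snd p) x) * peval (snd q) x - peval (fst q) x * peval (snd p) x"
      by (simp add: peval_diff peval_mult algebra_simps)
    also have "\<dots> = 0"
      using f(2) pq that by (simp add: rat_eq_on_def)
    finally show ?thesis .
  qed
  then have "peval (f * snd q - fst q) x = 0" if "x \<in> X" for x
    using nonzero_on_components_cancel[OF X _ _ that] p' by (simp add: rat_elem_iff)
  then have "rat_eq_on X (f, 1) q"
    by (simp add: rat_eq_on_pol peval_diff peval_mult)
  then show ?thesis
    using f(1) q by (auto simp: pol_span_def)
qed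

lemma pol_span_frac_add:
  assumes "p \<in> pol_span X P" "q \<in> pol_span X P"
  shows "frac_add p q \<in> pol_span X P"
proof -
  obtain f g where "f \<in> lin_comb P" "\<forall>x\<in>X. peval f x * peval (snd p) x = peval (fst p) x"
    "g \<in> lin_comb P" "\<forall>x\<in>X. peval g x * peval (snd q) x = peval (fst q) x"
    "rat_elem X p" "rat_elem X q"
    using assms by (auto simp: pol_span_def rat_eq_on_pol)
  then show ?thesis
    unfolding pol_span_def rat_eq_on_pol
    by (auto simp: frac_add_def peval_add peval_mult algebra_simps
        intro!: bexI[of _ "f + g"] lin_comb_add rat_elem_frac_add[unfolded frac_add_def])
qed

lemma frac_mul_mem_pol_span:
  assumes "p \<in> pol_span X P" "q \<in> pol_span X Q"
  shows "frac_mul p q \<in> pol_span X (P * Q)"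
proof -
  obtain f g where "f \<in> lin_comb P" "\<forall>x\<in>X. peval f x * peval (snd p) x = peval (fst p) x"
    "g \<in> lin_comb Q" "\<forall>x\<in>X. peval g x * peval (snd q) x = peval (fst q) x"
    "rat_elem X p" "rat_elem X q"
    using assms by (auto simp: pol_span_def rat_eq_on_pol)
  then show ?thesis
    unfolding pol_span_def rat_eq_on_pol
    by (auto simp: frac_mul_def peval_mult algebra_simps
        intro!: bexI[of _ "f * g"] lin_comb_mult rat_elem_frac_mul[unfolded frac_mul_def])
qed

lemma pol_span_smult:
  assumes "p \<in> pol_span X P"
  shows "frac_mul (const_pol c, 1) p \<in> pol_span X P"
proof -
  obtain f where "f \<in> lin_comb P" "\<forall>x\<in>X. peval f x * peval (snd p) x = peval (fst p) x"
    "rat_elem X p"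
    using assms by (auto simp: pol_span_def rat_eq_on_pol)
  then show ?thesis
    unfolding pol_span_def rat_eq_on_pol
    by (auto simp: frac_mul_def peval_mult mult.assoc rat_elem_iff
        intro!: bexI[of _ "const_pol c * f"] lin_comb_smult)
qed

lemma rsub_pol_span:
  assumes "zclosed X"
  shows "rsub X (pol_span X P)"
  unfolding rsub_def
proof (intro conjI ballI allI impI)
  show "pol_span X P \<subseteq> {p. rat_elem X p}"
    by (auto simp: pol_span_def)
  show "(0, 1) \<in> pol_span X P"
    by (auto simp: pol_span_def rat_elem_pol rat_eq_on_def intro!: bexI[of _ 0] lin_comb_zero)
  show "q \<in> pol_span X P" if "p \<in> pol_span X P" "rat_elem X q" "rat_eq_on X p q" for p q
    using pol_span_saturated[OF assms] that .
  show "frac_add p q \<in> pol_span X P" if "p \<in> pol_span X P" "q \<in> pol_span X P" for p q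
    using pol_span_frac_add that .
  show "frac_mul (const_pol c, 1) p \<in> pol_span X P" if "p \<in> pol_span X P" for p c
    using pol_span_smult that .
qed

lemma frac_of_pol_mem_pol_span: "f \<in> P \<Longrightarrow> frac_of_pol f \<in> pol_span X P"
  by (auto simp: pol_span_def frac_of_pol_def rat_elem_pol rat_eq_on_def intro: lin_comb_base)

lemma pol_span_minimal:
  assumes L: "rsub X L" and P: "frac_of_pol ` P \<subseteq> L"
  shows "pol_span X P \<subseteq> L"
proof -
  have "(f, 1) \<in> L" if "f \<in> lin_comb P" for f
    using that
  proof (induct f rule: lin_comb.induct)
    case lin_comb_zero
    then show ?case using L by (simp add: rsub_def)
  next
    case (lin_comb_step p q c)
    have "(p, 1) \<in> L"
      using P lin_comb_step(1) by (auto simp: frac_of_pol_def)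
    then have "frac_add (frac_mul (const_pol c, 1) (p, 1)) (q, 1) \<in> L"
      using L lin_comb_step(3) by (simp add: rsub_def)
    then show ?case
      by (simp add: frac_add_def frac_mul_def)
  qed
  then show ?thesis
    using L unfolding pol_span_def rsub_def by blast
qed

lemma rspan_eqI:
  assumes "rsub X L" "G \<subseteq> L" "\<And>L'. rsub X L' \<Longrightarrow> G \<subseteq> L' \<Longrightarrow> L \<subseteq> L'"
  shows "rspan X G = L"
  unfolding rspan_def using assms by blast

lemma rsub_of_pols_eq_pol_span:
  assumes "zclosed X"
  shows "rsub_of_pols X P = pol_span X P"
  unfolding rsub_of_pols_def
proof (rule rspan_eqI)
  show "rsub X (pol_span X P)"
    by (rule rsub_pol_span[OF assms])
  show "frac_of_pol ` P \<subseteq> pol_span X P"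
    by (rule image_subsetI) (rule frac_of_pol_mem_pol_span)
qed (rule pol_span_minimal)

lemma KX_mul_rsub_of_pols:
  assumes X: "zclosed X"
  shows "KX_mul X (rsub_of_pols X P) (rsub_of_pols X Q) = rsub_of_pols X (P * Q)"
  unfolding KX_mul_def rsub_of_pols_eq_pol_span[OF X]
proof (rule rspan_eqI[OF rsub_pol_span[OF X]])
  show "{frac_mul p q |p q. p \<in> pol_span X P \<and> q \<in> pol_span X Q} \<subseteq> pol_span X (P * Q)"
    using frac_mul_mem_pol_span by blast
next
  fix L assume L: "rsub X L"
    and prod: "{frac_mul p q |p q. p \<in> pol_span X P \<and> q \<in> pol_span X Q} \<subseteq> L"
  have "frac_of_pol (p * q) \<in> L" if "p \<in> P" "q \<in> Q" for p q
  proof -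
    have "frac_mul (frac_of_pol p) (frac_of_pol q) \<in> L"
      using prod that frac_of_pol_mem_pol_span by blast
    then show ?thesis
      by (simp add: frac_mul_def frac_of_pol_def)
  qed
  then show "pol_span X (P * Q) \<subseteq> L"
    by (intro pol_span_minimal[OF L]) (auto elim: set_times_elim)
qed

lemma pol_span_mono:
  assumes "P \<subseteq> span_on X Q"
  shows "pol_span X P \<subseteq> pol_span X Q"
proof
  fix q assume "q \<in> pol_span X P"
  then obtain f where f: "f \<in> lin_comb P" "rat_eq_on X (f, 1) q" and q: "rat_elem X q"
    by (auto simp: pol_span_def)
  obtain g where "g \<in> lin_comb Q" "\<forall>x\<in>X. peval f x = peval g x"
    using f(1) span_on_subset[OF assms] by (auto simp: span_on_def)
  with f(2) q show "q \<in> pol_span X Q"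
    by (auto simp: pol_span_def rat_eq_on_def)
qed

lemma KX_rsub_of_pols:
  assumes X: "zclosed X" and P: "lin_closed P" "\<forall>p\<in>P. tdeg p \<le> d"
    and nonzero: "\<forall>Y. zcomponent X Y \<longrightarrow> (\<exists>p\<in>P. \<exists>y\<in>Y. peval p y \<noteq> 0)"
  shows "KX X (rsub_of_pols X P)"
  unfolding KX_def rsub_of_pols_eq_pol_span[OF X]
proof (intro conjI)
  show "rsub X (pol_span X P)"
    by (rule rsub_pol_span[OF X])
  obtain F where F: "finite F" "F \<subseteq> P" "P \<subseteq> lin_comb F"
    using lin_closed_bounded_finite_spanning_set[OF P] by blast
  have "P \<subseteq> span_on X F"
    using F(3) lin_comb_subset_span_on by (rule order_trans)
  moreover have "F \<subseteq> span_on X P"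
    using F(2) lin_comb_base lin_comb_subset_span_on by (meson subset_iff)
  ultimately have "pol_span X P = pol_span X F"
    by (intro equalityI pol_span_mono)
  also have "\<dots> = rspan X (frac_of_pol ` F)"
    using rsub_of_pols_eq_pol_span[OF X, of F] by (simp add: rsub_of_pols_def)
  moreover have "frac_of_pol ` F \<subseteq> pol_span X P"
  proof (rule image_subsetI)
    fix f assume "f \<in> F"
    with F(2) show "frac_of_pol f \<in> pol_span X P"
      by (intro frac_of_pol_mem_pol_span) blast
  qed
  ultimately show "\<exists>G. finite G \<and> G \<subseteq> pol_span X P \<and> pol_span X P = rspan X G"
    using F(1) by blast
  show "\<forall>Y. zcomponent X Y \<longrightarrow> (\<exists>p\<in>pol_span X P. \<not> (\<forall>x\<in>Y. peval (fst p) x = 0))"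
  proof (intro allI impI)
    fix Y assume "zcomponent X Y"
    then obtain p y where "p \<in> P" "y \<in> Y" "peval p y \<noteq> 0"
      using nonzero by blast
    then show "\<exists>q\<in>pol_span X P. \<not> (\<forall>x\<in>Y. peval (fst q) x = 0)"
      using frac_of_pol_mem_pol_span[of p P X] by (intro bexI[of _ "(p, 1)"]) (auto simp: frac_of_pol_def)
  qed
qed

lemma KX_eq_refl: "KX_eq X L L"
  by (auto simp: KX_eq_def rat_eq_on_def mult.commute)

lemma GX_eq_rsub_of_pols:
  assumes X: "zclosed X" and Z: "KX X (rsub_of_pols X Z)"
    and "P * Q' * Z \<subseteq> span_on X (P' * Q * Z)" "P' * Q * Z \<subseteq> span_on X (P * Q' * Z)"
  shows "GX_eq X (rsub_of_pols X P, rsub_of_pols X Q) (rsub_of_pols X P', rsub_of_pols X Q')"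
proof -
  have "rsub_of_pols X (P * Q' * Z) = rsub_of_pols X (P' * Q * Z)"
    using assms(3,4) by (simp add: rsub_of_pols_eq_pol_span[OF X] equalityI pol_span_mono)
  then show ?thesis
    unfolding GX_eq_def using Z
    by (intro exI[of _ "rsub_of_pols X Z"]) (simp add: KX_mul_rsub_of_pols[OF X] KX_eq_refl)
qed

section \<open>Ideals of the local ring\<close>

lemma loc_elem_pol: "loc_elem (f, 1)"
  by (simp add: loc_elem_def)

lemma loc_ideal_pol_mult:
  assumes "loc_ideal X I" "(u, 1) \<in> I"
  shows "(c * u, 1) \<in> I"
proof -
  have "frac_mul (c, 1) (u, 1) \<in> I"
    using assms loc_elem_pol unfolding loc_ideal_def by blast
  then show ?thesis by (simp add: frac_mul_def)
qed

lemma loc_ideal_pol_add: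
  assumes "loc_ideal X I" "(u, 1) \<in> I" "(w, 1) \<in> I"
  shows "(u + w, 1) \<in> I"
proof -
  have "frac_add (u, 1) (w, 1) \<in> I"
    using assms unfolding loc_ideal_def by blast
  then show ?thesis by (simp add: frac_add_def)
qed

lemma loc_ideal_pol_diff: "loc_ideal X I \<Longrightarrow> (u, 1) \<in> I \<Longrightarrow> (w, 1) \<in> I \<Longrightarrow> (u - w, 1) \<in> I"
  using loc_ideal_pol_add[of X I u "- w"] loc_ideal_pol_mult[of X I w "- 1"] by simp

lemma loc_ideal_pol_sum:
  assumes "loc_ideal X I"
  shows "finite S \<Longrightarrow> (\<And>s. s \<in> S \<Longrightarrow> (f s, 1) \<in> I) \<Longrightarrow> ((\<Sum>s\<in>S. f s), 1) \<in> I"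
  by (induct S rule: finite_induct) (use assms in \<open>auto simp: loc_ideal_def intro: loc_ideal_pol_add\<close>)

lemma loc_ideal_numerator:
  assumes I: "loc_ideal X I" and p: "p \<in> I"
  shows "(fst p, 1) \<in> I"
proof -
  have "frac_mul (snd p, 1) p \<in> I"
    using I p loc_elem_pol unfolding loc_ideal_def by blast
  moreover have "loc_eq X (frac_mul (snd p, 1) p) (fst p, 1)"
    unfolding loc_eq_def by (rule exI[of _ 1]) (simp add: frac_mul_def peval_mult origin_def)
  ultimately show ?thesis
    using I loc_elem_pol unfolding loc_ideal_def by blast
qed

lemma loc_ideal_loc_ring: "loc_ideal X loc_ring"
  unfolding loc_ideal_def loc_ring_def
  by (auto simp: loc_elem_def frac_add_def frac_mul_def peval_mult)

lemma loc_ideal_Inter: "\<F> \<noteq> {} \<Longrightarrow> (\<And>K. K \<in> \<F> \<Longrightarrow> loc_ideal X K) \<Longrightarrow> loc_ideal X (\<Inter>\<F>)"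
  unfolding loc_ideal_def by blast

lemma loc_ideal_ideal_prod:
  assumes "loc_ideal X I" "loc_ideal X J"
  shows "loc_ideal X (ideal_prod X I J)"
proof -
  let ?F = "{K. loc_ideal X K \<and> (\<forall>p\<in>I. \<forall>q\<in>J. frac_mul p q \<in> K)}"
  have "frac_mul p q \<in> loc_ring" if "p \<in> I" "q \<in> J" for p q
    using assms that
    by (auto simp: loc_ideal_def loc_ring_def loc_elem_def frac_mul_def peval_mult)
  then have "loc_ring \<in> ?F"
    using loc_ideal_loc_ring by blast
  then have "?F \<noteq> {}" by blast
  then show ?thesis
    unfolding ideal_prod_def by (rule loc_ideal_Inter) blast
qed

lemma frac_mul_mem_ideal_prod: "p \<in> I \<Longrightarrow> q \<in> J \<Longrightarrow> frac_mul p q \<in> ideal_prod X I J"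
  unfolding ideal_prod_def by blast

lemma monomial_mem_loc_max:
  "a \<noteq> 0 \<Longrightarrow> (Poly_Mapping.single a (1::'k::field), 1) \<in> (loc_max :: ('n::finite, 'k) frac set)"
  by (simp add: loc_max_def loc_elem_def peval_origin lookup_single)

lemma monomial_mem_loc_max_pow:
  "k \<le> mon_deg a \<Longrightarrow>
    (Poly_Mapping.single a (1::'k::field), 1) \<in> ideal_pow (X :: ('n::finite \<Rightarrow> 'k) set) loc_max k"
proof (induct k arbitrary: a)
  case 0
  then show ?case by (simp add: loc_ring_def loc_elem_def)
next
  case (Suc k)
  then obtain b c where bc: "a = b + c" "mon_deg b = k"
    using mon_deg_split[of k a] by auto
  then have "0 < mon_deg c"
    using Suc.prems by (simp add: mon_deg_add)
  then have "c \<noteq> 0"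
    by (auto simp: mon_deg_eq_0_iff[symmetric])
  then have "frac_mul (Poly_Mapping.single b 1, 1) (Poly_Mapping.single c 1, 1)
      \<in> ideal_prod X (ideal_pow X loc_max k) loc_max"
    using Suc.hyps[of b] bc(2) monomial_mem_loc_max[of c] by (intro frac_mul_mem_ideal_prod) simp_all
  then show ?case
    using bc(1) by (simp add: frac_mul_def mult_single)
qed

lemma monomial_mem_ideal:
  assumes I: "loc_ideal X I" and r: "ideal_pow X loc_max r \<subseteq> I" and a: "r \<le> mon_deg a"
  shows "(Poly_Mapping.single a c, 1) \<in> I"
proof -
  have "(Poly_Mapping.single a 1, 1) \<in> I"
    using monomial_mem_loc_max_pow[OF a] r by blast
  then have "(const_pol c * Poly_Mapping.single a 1, 1) \<in> I"
    by (rule loc_ideal_pol_mult[OF I])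
  then show ?thesis
    by (simp add: const_pol_def mult_single)
qed

lemma Ipol_iff: "f \<in> Ipol I m \<longleftrightarrow> tdeg f \<le> m \<and> (f, 1) \<in> I"
  by (simp add: Ipol_def frac_of_pol_def)

lemma Apol_iff: "f \<in> Apol m \<longleftrightarrow> tdeg f \<le> m"
  by (simp add: Apol_def)

lemma var_power_mem_Ipol:
  assumes "loc_ideal X I" "ideal_pow X loc_max r \<subseteq> I" "r \<le> m"
  shows "Poly_Mapping.single (Poly_Mapping.single i m) 1 \<in> Ipol I m"
  using assms tdeg_single_le[of "Poly_Mapping.single i m"]
  by (simp add: Ipol_iff monomial_mem_ideal mon_deg_single)

lemma monomial_mem_Apol: "Poly_Mapping.single a c \<in> Apol (mon_deg a)"
  by (simp add: Apol_iff tdeg_single_le)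

lemma one_mem_Apol: "1 \<in> Apol b"
  by (simp add: Apol_iff)

lemma Apol_mono: "b \<le> c \<Longrightarrow> Apol b \<subseteq> Apol c"
  by (auto simp: Apol_iff)

lemma Apol_times_Apol: "Apol b * Apol c \<subseteq> Apol (b + c)"
proof
  fix f assume "f \<in> Apol b * Apol c"
  then show "f \<in> Apol (b + c)"
    by (rule set_times_elim) (simp add: Apol_iff tdeg_mult_le_add)
qed

lemma Ipol_times_Apol:
  assumes "loc_ideal X I"
  shows "Ipol I a * Apol b \<subseteq> Ipol I (a + b)"
proof
  fix f assume "f \<in> Ipol I a * Apol b"
  then obtain u v where "f = u * v" "tdeg u \<le> a" "(u, 1) \<in> I" "tdeg v \<le> b"
    by (auto simp: Ipol_iff Apol_iff elim: set_times_elim)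
  then show "f \<in> Ipol I (a + b)"
    using loc_ideal_pol_mult[OF assms, of u v] by (simp add: Ipol_iff tdeg_mult_le_add mult.commute)
qed

lemma lin_closed_Ipol:
  assumes "loc_ideal X I"
  shows "lin_closed (Ipol I m)"
  unfolding lin_closed_def
  using tdeg_add_le_bound order_trans[OF tdeg_const_pol_mult_le]
    loc_ideal_pol_add[OF assms] loc_ideal_pol_mult[OF assms]
  by (auto simp: Ipol_iff)

lemma lin_closed_Apol: "lin_closed (Apol m)"
  unfolding lin_closed_def
  using tdeg_add_le_bound order_trans[OF tdeg_const_pol_mult_le] by (auto simp: Apol_iff)

section \<open>Independence of m\<close>

lemma keys_sum_single_subset:
  "Poly_Mapping.keys (\<Sum>a\<in>S. Poly_Mapping.single a (g a)) \<subseteq> S"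
  using keys_sum[of "\<lambda>a. Poly_Mapping.single a (g a)" S] by auto

lemma lin_comb_times_subset:
  assumes "P \<subseteq> lin_comb Q"
  shows "P * R \<subseteq> lin_comb (Q * R)"
proof
  fix f assume "f \<in> P * R"
  then obtain p s where "f = p * s" "p \<in> P" "s \<in> R"
    by (rule set_times_elim)
  then show "f \<in> lin_comb (Q * R)"
    using assms lin_comb_mult[of p Q s R] lin_comb_base by auto
qed

lemma monomial_mem_Ipol_times_Apol_1:
  assumes I: "loc_ideal X I" and r: "ideal_pow X loc_max r \<subseteq> I" and d: "r \<le> d"
    and a: "mon_deg a = Suc d"
  shows "Poly_Mapping.single a c \<in> Ipol I d * Apol 1"
proof -
  obtain b e where be: "a = b + e" "mon_deg b = d"
    using mon_deg_split[of d a] a by auto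
  then have "mon_deg e = 1"
    using a by (simp add: mon_deg_add)
  have "Poly_Mapping.single b c \<in> Ipol I d"
    using be(2) d tdeg_single_le[of b] monomial_mem_ideal[OF I r] by (simp add: Ipol_iff)
  moreover have "Poly_Mapping.single e 1 \<in> Apol 1"
    using monomial_mem_Apol[of e 1] \<open>mon_deg e = 1\<close> by simp
  ultimately have "Poly_Mapping.single b c * Poly_Mapping.single e 1 \<in> Ipol I d * Apol 1"
    by (rule set_times_intro)
  then show ?thesis
    using be(1) by (simp add: mult_single)
qed

text \<open>The top-degree part h of f lies in I and in the span of I^(d) A^(1) monomial by monomial;
  the rest f - h then lies in I^(d).\<close>

lemma Ipol_Suc_subset:
  assumes I: "loc_ideal X I" and r: "ideal_pow X loc_max r \<subseteq> I" and d: "r \<le> d"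
  shows "Ipol I (Suc d) \<subseteq> lin_comb (Ipol I d * Apol 1)"
proof
  fix f assume f: "f \<in> Ipol I (Suc d)"
  let ?K = "Poly_Mapping.keys f" and ?top = "{a. mon_deg a = Suc d}"
  let ?s = "\<lambda>a. Poly_Mapping.single a (Poly_Mapping.lookup f a)"
  define h where "h = (\<Sum>a\<in>?K \<inter> ?top. ?s a)"
  define l where "l = (\<Sum>a\<in>?K - ?top. ?s a)"
  have f_eq: "f = h + l"
    unfolding h_def l_def by (subst sum_single_lookup[of f]) (rule sum.Int_Diff[OF finite_keys])
  have h: "h \<in> lin_comb (Ipol I d * Apol 1)"
    unfolding h_def using monomial_mem_Ipol_times_Apol_1[OF I r d]
    by (intro lin_comb_sum lin_comb_base) simp_all
  have "(h, 1) \<in> I"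
    unfolding h_def using d by (intro loc_ideal_pol_sum[OF I] monomial_mem_ideal[OF I r]) auto
  then have "(l, 1) \<in> I"
    using f f_eq loc_ideal_pol_diff[OF I, of f h] by (simp add: Ipol_iff)
  moreover have "tdeg l \<le> d"
    unfolding tdeg_le_iff
  proof
    fix a assume "a \<in> Poly_Mapping.keys l"
    then have "a \<in> ?K - ?top"
      unfolding l_def by (rule subsetD[OF keys_sum_single_subset])
    then show "mon_deg a \<le> d"
      using f mon_deg_le_tdeg[of a f] by (auto simp: Ipol_iff)
  qed
  ultimately have "l * 1 \<in> Ipol I d * Apol 1"
    by (intro set_times_intro) (simp_all add: Ipol_iff one_mem_Apol)
  then have "l \<in> lin_comb (Ipol I d * Apol 1)"
    using lin_comb_base[of "l * 1"] by simp
  then show "f \<in> lin_comb (Ipol I d * Apol 1)"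
    using lin_comb_add[OF h] f_eq by simp
qed

lemma Ipol_add_subset:
  assumes I: "loc_ideal X I" and r: "ideal_pow X loc_max r \<subseteq> I" and a: "r \<le> a"
  shows "Ipol I (a + b) \<subseteq> lin_comb (Ipol I a * Apol b)"
proof (induct b)
  case 0
  show ?case
  proof
    fix f assume "f \<in> Ipol I (a + 0)"
    then have "f * 1 \<in> Ipol I a * Apol 0"
      using one_mem_Apol by (intro set_times_intro) simp_all
    then show "f \<in> lin_comb (Ipol I a * Apol 0)"
      using lin_comb_base[of "f * 1"] by simp
  qed
next
  case (Suc b)
  have step: "Ipol I (a + Suc b) \<subseteq> lin_comb (Ipol I (a + b) * Apol 1)"
    using Ipol_Suc_subset[OF I r, of "a + b"] a by simp
  have "Ipol I (a + b) * Apol 1 \<subseteq> lin_comb (Ipol I a * Apol b * Apol 1)"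
    by (rule lin_comb_times_subset[OF Suc])
  also have "\<dots> \<subseteq> lin_comb (Ipol I a * Apol (Suc b))"
    using set_times_mono2[OF order_refl Apol_times_Apol, of "Ipol I a" b 1]
    by (intro lin_comb_mono) (simp add: mult.assoc)
  finally have "lin_comb (Ipol I (a + b) * Apol 1) \<subseteq> lin_comb (Ipol I a * Apol (Suc b))"
    by (rule lin_comb_subset)
  with step show ?case
    by (rule order_trans)
qed

lemma KX_Apol:
  assumes "zclosed X"
  shows "KX X (rsub_of_pols X (Apol b))"
proof (rule KX_rsub_of_pols[OF assms lin_closed_Apol])
  show "\<forall>p\<in>Apol b. tdeg p \<le> b"
    by (simp add: Apol_iff)
  show "\<forall>Y. zcomponent X Y \<longrightarrow> (\<exists>p\<in>Apol b. \<exists>y\<in>Y. peval p y \<noteq> 0)"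
  proof (intro allI impI)
    fix Y assume "zcomponent X Y"
    then obtain y where "y \<in> Y"
      by (auto simp: zcomponent_def zirred_def)
    then show "\<exists>p\<in>Apol b. \<exists>y\<in>Y. peval p y \<noteq> 0"
      using one_mem_Apol[of b] by force
  qed
qed

lemma zcomponent_nonorigin_point:
  assumes "affine_variety_equidim X n" "n \<ge> 1" "zcomponent X Y"
  obtains y where "y \<in> Y" "y \<noteq> origin"
proof -
  have "zdim_eq Y n"
    using assms(1,3) by (simp add: affine_variety_equidim_def)
  then obtain c where c: "\<forall>i\<le>n. zirred (c i)" "\<forall>i<n. c i \<subset> c (Suc i)" "c n = Y"
    by (auto simp: zdim_eq_def zchain_def)
  have "n - 1 < n"
    using assms(2) by simp
  then have "c (n - 1) \<subset> c (Suc (n - 1))"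
    using c(2) by blast
  then have "c (n - 1) \<subset> Y"
    using c(3) assms(2) by simp
  moreover have "c (n - 1) \<noteq> {}"
    using c(1) by (simp add: zirred_def)
  ultimately obtain z w where "z \<in> Y" "w \<in> Y" "z \<noteq> w"
    by blast
  then show ?thesis
    using that by (cases "z = origin") auto
qed

lemma KX_Ipol:
  assumes V: "affine_variety_equidim X n" and n: "n \<ge> 1" and I: "loc_ideal X I"
    and r: "ideal_pow X loc_max r \<subseteq> I" and m: "r \<le> m"
  shows "KX X (rsub_of_pols X (Ipol I m))"
proof (rule KX_rsub_of_pols[OF _ lin_closed_Ipol[OF I]])
  show "zclosed X"
    using V by (simp add: affine_variety_equidim_def)
  show "\<forall>p\<in>Ipol I m. tdeg p \<le> m"
    by (simp add: Ipol_iff)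
  show "\<forall>Y. zcomponent X Y \<longrightarrow> (\<exists>p\<in>Ipol I m. \<exists>y\<in>Y. peval p y \<noteq> 0)"
  proof (intro allI impI)
    fix Y assume "zcomponent X Y"
    then obtain y where "y \<in> Y" "y \<noteq> origin"
      using zcomponent_nonorigin_point[OF V n] by blast
    moreover from this(2) obtain i where "y i \<noteq> 0"
      by (auto simp: origin_def)
    moreover have "peval (Poly_Mapping.single (Poly_Mapping.single i m) 1) y \<noteq> 0"
      using \<open>y i \<noteq> 0\<close> by (simp add: peval_single_single)
    ultimately show "\<exists>p\<in>Ipol I m. \<exists>y\<in>Y. peval p y \<noteq> 0"
      using var_power_mem_Ipol[OF I r m, of i] by blast
  qed
qed

lemma Ipol_times_Apol_subset:
  assumes I: "loc_ideal X I" and r: "ideal_pow X loc_max r \<subseteq> I" and m: "r \<le> m"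
  shows "Ipol I m' * Apol m \<subseteq> lin_comb (Ipol I m * Apol m')"
  using Ipol_times_Apol[OF I, of m' m] Ipol_add_subset[OF I r m, of m'] by (simp add: add.commute)

lemma GX_eq_Ipol_Apol:
  assumes X: "zclosed X" and I: "loc_ideal X I" and r: "ideal_pow X loc_max r \<subseteq> I"
    and m: "r \<le> m" and m': "r \<le> m'"
  shows "GX_eq X (rsub_of_pols X (Ipol I m), rsub_of_pols X (Apol m))
                 (rsub_of_pols X (Ipol I m'), rsub_of_pols X (Apol m'))"
proof (rule GX_eq_rsub_of_pols[OF X KX_Apol[OF X, of 0]])
  show "Ipol I m * Apol m' * Apol 0 \<subseteq> span_on X (Ipol I m' * Apol m * Apol 0)"
    using lin_comb_times_subset[OF Ipol_times_Apol_subset[OF I r m']] lin_comb_subset_span_on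
    by (rule order_trans)
  show "Ipol I m' * Apol m * Apol 0 \<subseteq> span_on X (Ipol I m * Apol m' * Apol 0)"
    using lin_comb_times_subset[OF Ipol_times_Apol_subset[OF I r m]] lin_comb_subset_span_on
    by (rule order_trans)
qed

section \<open>Products of ideals\<close>

inductive_set pideal :: "('n::finite, 'k::field) mpol set \<Rightarrow> ('n, 'k) mpol set" for S where
  pideal_zero: "0 \<in> pideal S"
| pideal_step: "s \<in> S \<Longrightarrow> t \<in> pideal S \<Longrightarrow> c * s + t \<in> pideal S"

lemma pideal_add: "p \<in> pideal S \<Longrightarrow> q \<in> pideal S \<Longrightarrow> p + q \<in> pideal S"
  by (induct p rule: pideal.induct) (auto simp: add.assoc intro: pideal_step)

lemma pideal_mult: "p \<in> pideal S \<Longrightarrow> c * p \<in> pideal S"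
proof (induct p rule: pideal.induct)
  case (pideal_step s t d)
  have "c * (d * s + t) = (c * d) * s + c * t"
    by (simp add: algebra_simps)
  then show ?case
    using pideal_step pideal.pideal_step by metis
qed (simp add: pideal_zero)

lemma pideal_base: "s \<in> S \<Longrightarrow> s \<in> pideal S"
  using pideal_step[OF _ pideal_zero, of s S 1] by simp

definition numerator_prods :: "('n::finite, 'k::field) frac set \<Rightarrow> ('n, 'k) frac set \<Rightarrow> ('n, 'k) mpol set" where
  "numerator_prods I J = {u * w | u w. (u, 1) \<in> I \<and> (w, 1) \<in> J}"

text \<open>Since ideal_prod is only defined as an intersection, membership in it is controlled through
  this explicit local ideal containing all products.\<close>

definition ideal_prod_hull ::
  "('n::finite \<Rightarrow> 'k::field) set \<Rightarrow> ('n, 'k) frac set \<Rightarrow> ('n, 'k) frac set \<Rightarrow> ('n, 'k) frac set" where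
  "ideal_prod_hull X I J = {q. loc_elem q \<and>
     (\<exists>e v. peval e origin \<noteq> 0 \<and> v \<in> pideal (numerator_prods I J) \<and>
       (\<forall>x\<in>X. peval e x * peval (fst q) x = peval v x * peval (snd q) x))}"

lemma ideal_prod_hull_saturated:
  assumes p: "p \<in> ideal_prod_hull X I J" and q: "loc_elem q" and pq: "loc_eq X p q"
  shows "q \<in> ideal_prod_hull X I J"
proof -
  obtain e v where ev: "peval e origin \<noteq> 0" "v \<in> pideal (numerator_prods I J)"
      "\<forall>x\<in>X. peval e x * peval (fst p) x = peval v x * peval (snd p) x" and p': "loc_elem p"
    using p by (auto simp: ideal_prod_hull_def)
  obtain h where h: "peval h origin \<noteq> 0"
      "\<forall>x\<in>X. peval h x * (peval (fst p) x * peval (snd q) x - peval (fst q) x * peval (snd p) x) = 0"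
    using pq by (auto simp: loc_eq_def)
  let ?e = "h * e * snd p" and ?v = "(h * snd p) * v"
  have "peval ?e origin \<noteq> 0"
    using ev(1) h(1) p' by (simp add: peval_mult loc_elem_def)
  moreover have "?v \<in> pideal (numerator_prods I J)"
    using ev(2) by (rule pideal_mult)
  moreover have "peval ?e x * peval (fst q) x = peval ?v x * peval (snd q) x" if x: "x \<in> X" for x
  proof -
    have hp: "peval h x * (peval (fst p) x * peval (snd q) x) = peval h x * (peval (fst q) x * peval (snd p) x)"
      using h(2) x by (simp add: right_diff_distrib)
    have "peval ?e x * peval (fst q) x = peval e x * (peval h x * (peval (fst q) x * peval (snd p) x))"
      by (simp add: peval_mult mult_ac)
    also have "\<dots> = peval h x * peval (snd q) x * (peval e x * peval (fst p) x)"
      unfolding hp[symmetric] by (simp add: mult_ac)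
    also have "\<dots> = peval ?v x * peval (snd q) x"
      using ev(3) x by (simp add: peval_mult mult_ac)
    finally show ?thesis .
  qed
  ultimately show ?thesis
    using q unfolding ideal_prod_hull_def by blast
qed

lemma ideal_prod_hull_frac_add:
  assumes p: "p \<in> ideal_prod_hull X I J" and q: "q \<in> ideal_prod_hull X I J"
  shows "frac_add p q \<in> ideal_prod_hull X I J"
proof -
  obtain e1 v1 where ev1: "peval e1 origin \<noteq> 0" "v1 \<in> pideal (numerator_prods I J)"
      "\<forall>x\<in>X. peval e1 x * peval (fst p) x = peval v1 x * peval (snd p) x" and p': "loc_elem p"
    using p by (auto simp: ideal_prod_hull_def)
  obtain e2 v2 where ev2: "peval e2 origin \<noteq> 0" "v2 \<in> pideal (numerator_prods I J)"
      "\<forall>x\<in>X. peval e2 x * peval (fst q) x = peval v2 x * peval (snd q) x" and q': "loc_elem q"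
    using q by (auto simp: ideal_prod_hull_def)
  let ?e = "e1 * e2" and ?v = "e2 * v1 + e1 * v2"
  have "peval ?e origin \<noteq> 0"
    using ev1(1) ev2(1) by (simp add: peval_mult)
  moreover have "?v \<in> pideal (numerator_prods I J)"
    using ev1(2) ev2(2) by (intro pideal_add pideal_mult)
  moreover have "peval ?e x * peval (fst (frac_add p q)) x = peval ?v x * peval (snd (frac_add p q)) x"
    if x: "x \<in> X" for x
  proof -
    have "peval ?e x * peval (fst (frac_add p q)) x
        = peval e2 x * peval (snd q) x * (peval e1 x * peval (fst p) x)
          + peval e1 x * peval (snd p) x * (peval e2 x * peval (fst q) x)"
      by (simp add: frac_add_def peval_mult peval_add algebra_simps)
    also have "\<dots> = peval ?v x * peval (snd (frac_add p q)) x"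
      using ev1(3) ev2(3) x by (simp add: frac_add_def peval_mult peval_add algebra_simps)
    finally show ?thesis .
  qed
  moreover have "loc_elem (frac_add p q)"
    using p' q' by (simp add: loc_elem_def frac_add_def peval_mult)
  ultimately show ?thesis
    unfolding ideal_prod_hull_def by blast
qed

lemma ideal_prod_hull_frac_mul:
  assumes a: "loc_elem a" and p: "p \<in> ideal_prod_hull X I J"
  shows "frac_mul a p \<in> ideal_prod_hull X I J"
proof -
  obtain e v where ev: "peval e origin \<noteq> 0" "v \<in> pideal (numerator_prods I J)"
      "\<forall>x\<in>X. peval e x * peval (fst p) x = peval v x * peval (snd p) x" and p': "loc_elem p"
    using p by (auto simp: ideal_prod_hull_def)
  let ?e = "e * snd a" and ?v = "fst a * v"
  have "peval ?e origin \<noteq> 0"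
    using ev(1) a by (simp add: peval_mult loc_elem_def)
  moreover have "?v \<in> pideal (numerator_prods I J)"
    using ev(2) by (rule pideal_mult)
  moreover have "peval ?e x * peval (fst (frac_mul a p)) x = peval ?v x * peval (snd (frac_mul a p)) x"
    if x: "x \<in> X" for x
  proof -
    have "peval ?e x * peval (fst (frac_mul a p)) x
        = peval (snd a) x * peval (fst a) x * (peval e x * peval (fst p) x)"
      by (simp add: frac_mul_def peval_mult mult_ac)
    also have "\<dots> = peval ?v x * peval (snd (frac_mul a p)) x"
      using ev(3) x by (simp add: frac_mul_def peval_mult mult_ac)
    finally show ?thesis .
  qed
  moreover have "loc_elem (frac_mul a p)"
    using p' a by (simp add: loc_elem_def frac_mul_def peval_mult)
  ultimately show ?thesis
    unfolding ideal_prod_hull_def by blast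
qed

lemma loc_ideal_ideal_prod_hull: "loc_ideal X (ideal_prod_hull X I J)"
  unfolding loc_ideal_def
proof (intro conjI ballI allI impI)
  show "ideal_prod_hull X I J \<subseteq> {p. loc_elem p}"
    by (auto simp: ideal_prod_hull_def)
  have "loc_elem ((0::('a, 'b) mpol), 1)" "peval (1::('a, 'b) mpol) origin \<noteq> 0"
    by (simp_all add: loc_elem_def)
  then show "(0, 1) \<in> ideal_prod_hull X I J"
    unfolding ideal_prod_hull_def using pideal_zero by fastforce
qed (auto intro: ideal_prod_hull_saturated ideal_prod_hull_frac_add ideal_prod_hull_frac_mul)

lemma frac_mul_mem_ideal_prod_hull:
  assumes I: "loc_ideal X I" and J: "loc_ideal X J" and p: "p \<in> I" and q: "q \<in> J"
  shows "frac_mul p q \<in> ideal_prod_hull X I J"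
proof -
  have "fst p * fst q \<in> numerator_prods I J"
    using loc_ideal_numerator[OF I p] loc_ideal_numerator[OF J q]
    unfolding numerator_prods_def by blast
  then have "fst p * fst q \<in> pideal (numerator_prods I J)"
    by (rule pideal_base)
  moreover have "loc_elem p" "loc_elem q"
    using I J p q unfolding loc_ideal_def by auto
  then have "peval (snd p * snd q) origin \<noteq> 0" "loc_elem (frac_mul p q)"
    by (simp_all add: loc_elem_def frac_mul_def peval_mult)
  moreover have "\<forall>x\<in>X. peval (snd p * snd q) x * peval (fst (frac_mul p q)) x
      = peval (fst p * fst q) x * peval (snd (frac_mul p q)) x"
    by (simp add: frac_mul_def peval_mult mult_ac)
  ultimately show ?thesis
    unfolding ideal_prod_hull_def by blast
qed

lemma ideal_prod_pol_mem:
  assumes I: "loc_ideal X I" and J: "loc_ideal X J" and f: "(f, 1) \<in> ideal_prod X I J"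
  obtains e v where "peval e origin \<noteq> 0" "v \<in> pideal (numerator_prods I J)"
    "\<forall>x\<in>X. peval e x * peval f x = peval v x"
proof -
  have "ideal_prod X I J \<subseteq> ideal_prod_hull X I J"
    unfolding ideal_prod_def
    using loc_ideal_ideal_prod_hull frac_mul_mem_ideal_prod_hull[OF I J] by blast
  then show ?thesis
    using f that by (auto simp: ideal_prod_hull_def)
qed

text \<open>Inverting a unit of R modulo monomials of high degree: a geometric series in
  t = e / e(o) - 1, which has no constant term.\<close>

lemma unit_mult_eq_one_plus_order_ge:
  assumes e: "peval e origin \<noteq> 0"
  obtains q \<epsilon> where "e * q = 1 + \<epsilon>" "order_ge N \<epsilon>"
proof -
  let ?e0 = "peval e origin"
  define t where "t = const_pol (1 / ?e0) * e - 1"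
  have "Poly_Mapping.lookup t 0 = 0"
    using e by (simp add: t_def lookup_minus lookup_const_pol_mult peval_origin)
  have "order_ge 1 t"
    unfolding order_ge_def
  proof
    fix a assume "a \<in> Poly_Mapping.keys t"
    then have "a \<noteq> 0"
      using \<open>Poly_Mapping.lookup t 0 = 0\<close> by (auto simp: in_keys_iff)
    then show "1 \<le> mon_deg a"
      using mon_deg_eq_0_iff[of a] by linarith
  qed
  define q where "q = const_pol (1 / ?e0) * (\<Sum>i<N. (- t) ^ i)"
  have "e * q = (1 - (- t)) * (\<Sum>i<N. (- t) ^ i)"
    by (simp add: q_def t_def mult.assoc[symmetric] mult.commute)
  also have "\<dots> = 1 - (- t) ^ N"
    by (rule one_diff_power_eq[symmetric])
  finally have "e * q = 1 + (- ((- t) ^ N))"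
    by simp
  moreover have "order_ge N (- ((- t) ^ N))"
    using order_ge_power[of "- t" N] \<open>order_ge 1 t\<close> by simp
  ultimately show ?thesis
    using that by blast
qed

lemma span_on_times_subset:
  assumes "P \<subseteq> span_on X Q"
  shows "P * R \<subseteq> span_on X (Q * R)"
proof
  fix f assume "f \<in> P * R"
  then obtain p s where "f = p * s" "p \<in> P" "s \<in> R"
    by (rule set_times_elim)
  then show "f \<in> span_on X (Q * R)"
    using assms span_on_mult[of p X Q s R] lin_comb_base by auto
qed

lemma Ipol_times_Ipol:
  "Ipol I a * Ipol J b \<subseteq> Ipol (ideal_prod X I J) (a + b)"
proof
  fix f assume "f \<in> Ipol I a * Ipol J b"
  then obtain u w where "f = u * w" "u \<in> Ipol I a" "w \<in> Ipol J b"
    by (rule set_times_elim)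
  then show "f \<in> Ipol (ideal_prod X I J) (a + b)"
    using frac_mul_mem_ideal_prod[of "(u, 1)" I "(w, 1)" J X]
    by (simp add: Ipol_iff frac_mul_def tdeg_mult_le_add)
qed

locale primary_pair =
  fixes X :: "('n::finite \<Rightarrow> 'k::field) set" and I J :: "('n, 'k) frac set" and r m :: nat
  assumes I: "loc_ideal X I" and J: "loc_ideal X J"
    and rI: "ideal_pow X loc_max r \<subseteq> I" and rJ: "ideal_pow X loc_max r \<subseteq> J" and rm: "r \<le> m"
begin

definition IJA :: "nat \<Rightarrow> ('n, 'k) mpol set" where
  "IJA B = Ipol I m * Ipol J m * Apol B"

lemma IJA_mono: "B \<le> B' \<Longrightarrow> IJA B \<subseteq> IJA B'"
  unfolding IJA_def by (intro set_times_mono2 order_refl Apol_mono)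

lemma lin_comb_IJA_mono: "g \<in> lin_comb (IJA B) \<Longrightarrow> B \<le> B' \<Longrightarrow> g \<in> lin_comb (IJA B')"
  using lin_comb_mono[OF IJA_mono] by blast

lemma IJA_times_Apol: "IJA B * Apol b \<subseteq> IJA (B + b)"
proof -
  have "IJA B * Apol b = Ipol I m * Ipol J m * (Apol B * Apol b)"
    by (simp add: IJA_def mult.assoc)
  also have "\<dots> \<subseteq> IJA (B + b)"
    unfolding IJA_def by (intro set_times_mono2 order_refl Apol_times_Apol)
  finally show ?thesis .
qed

lemma pol_prod_mem_lin_comb_IJA:
  assumes u: "(u, 1) \<in> I" and w: "(w, 1) \<in> J" and B: "tdeg u + tdeg w \<le> B"
  shows "u * w \<in> lin_comb (IJA B)"
proof -
  have "u \<in> lin_comb (Ipol I m * Apol (tdeg u))"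
    using Ipol_add_subset[OF I rI rm, of "tdeg u"] u by (auto simp: Ipol_iff)
  moreover have "w \<in> lin_comb (Ipol J m * Apol (tdeg w))"
    using Ipol_add_subset[OF J rJ rm, of "tdeg w"] w by (auto simp: Ipol_iff)
  ultimately have "u * w \<in> lin_comb (Ipol I m * Apol (tdeg u) * (Ipol J m * Apol (tdeg w)))"
    by (rule lin_comb_mult)
  also have "Ipol I m * Apol (tdeg u) * (Ipol J m * Apol (tdeg w))
      = Ipol I m * Ipol J m * (Apol (tdeg u) * Apol (tdeg w))"
    by (simp add: mult_ac)
  also have "lin_comb \<dots> \<subseteq> lin_comb (IJA B)"
    unfolding IJA_def
    by (intro lin_comb_mono set_times_mono2 order_refl order_trans[OF Apol_times_Apol Apol_mono[OF B]])
  finally show ?thesis .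
qed

lemma pideal_mult_mem_lin_comb_IJA:
  assumes "v \<in> pideal (numerator_prods I J)"
  obtains B where "v * q \<in> lin_comb (IJA B)"
  using assms
proof (induct v arbitrary: thesis rule: pideal.induct)
  case pideal_zero
  then show ?case by (simp add: lin_comb_zero)
next
  case (pideal_step s t c)
  obtain u w where s: "s = u * w" "(u, 1) \<in> I" "(w, 1) \<in> J"
    using pideal_step.hyps(1) unfolding numerator_prods_def by blast
  obtain B1 where B1: "t * q \<in> lin_comb (IJA B1)"
    using pideal_step.hyps(3) by blast
  let ?B2 = "tdeg (c * q * u) + tdeg w"
  have "(c * q * u) * w \<in> lin_comb (IJA ?B2)"
    using loc_ideal_pol_mult[OF I s(2)] s(3) by (rule pol_prod_mem_lin_comb_IJA) simp
  then have "(c * q * u) * w + t * q \<in> lin_comb (IJA (max B1 ?B2))"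
    using B1 by (intro lin_comb_add) (auto elim: lin_comb_IJA_mono)
  moreover have "(c * s + t) * q = (c * q * u) * w + t * q"
    using s(1) by (simp add: algebra_simps)
  ultimately show ?case
    using pideal_step.prems by metis
qed

lemma order_ge_mem_lin_comb_IJA:
  assumes "order_ge (2 * r) g"
  shows "g \<in> lin_comb (IJA (tdeg g))"
proof -
  have "Poly_Mapping.single a (Poly_Mapping.lookup g a) \<in> lin_comb (IJA (tdeg g))"
    if a: "a \<in> Poly_Mapping.keys g" for a
  proof -
    have deg: "2 * r \<le> mon_deg a" "mon_deg a \<le> tdeg g"
      using assms a mon_deg_le_tdeg by (auto simp: order_ge_def)
    then obtain a1 a2 where aa: "a = a1 + a2" "mon_deg a1 = r"
      using mon_deg_split[of r a] by auto
    then have "r \<le> mon_deg a2"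
      using deg by (simp add: mon_deg_add)
    then have "(Poly_Mapping.single a2 1, 1) \<in> J"
      by (rule monomial_mem_ideal[OF J rJ])
    moreover have "(Poly_Mapping.single a1 (Poly_Mapping.lookup g a), 1) \<in> I"
      using aa by (intro monomial_mem_ideal[OF I rI]) simp
    moreover have "tdeg (Poly_Mapping.single a1 (Poly_Mapping.lookup g a))
        + tdeg (Poly_Mapping.single a2 (1::'k)) \<le> tdeg g"
      using add_mono[OF tdeg_single_le tdeg_single_le, of a1 "Poly_Mapping.lookup g a" a2 "1::'k"] deg aa
      by (simp add: mon_deg_add)
    ultimately show ?thesis
      using pol_prod_mem_lin_comb_IJA aa(1) by (fastforce simp: mult_single)
  qed
  then show ?thesis
    by (subst sum_single_lookup) (rule lin_comb_sum; simp)
qed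

text \<open>On X, f = (e f) q - f \<epsilon> with e q = 1 + \<epsilon>; here e f lies in the polynomial ideal generated
  by products from I and J, and every monomial of \<epsilon> splits into a factor in I and one in J.\<close>

lemma ideal_prod_mem_span_on_IJA:
  assumes f: "(f, 1) \<in> ideal_prod X I J"
  obtains B where "f \<in> span_on X (IJA B)"
proof -
  obtain e v where e: "peval e origin \<noteq> 0" and v: "v \<in> pideal (numerator_prods I J)"
    and ev: "\<forall>x\<in>X. peval e x * peval f x = peval v x"
    using ideal_prod_pol_mem[OF I J f] by blast
  obtain q \<epsilon> where q: "e * q = 1 + \<epsilon>" and \<epsilon>: "order_ge (2 * r) \<epsilon>"
    using unit_mult_eq_one_plus_order_ge[OF e] by blast
  obtain B1 where B1: "v * q \<in> lin_comb (IJA B1)"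
    using pideal_mult_mem_lin_comb_IJA[OF v] by blast
  have "f * \<epsilon> \<in> lin_comb (IJA (tdeg (f * \<epsilon>)))"
    using order_ge_mult[of 0 f "2 * r" \<epsilon>] \<epsilon> by (intro order_ge_mem_lin_comb_IJA) (simp add: order_ge_def)
  then have "v * q - f * \<epsilon> \<in> lin_comb (IJA (max B1 (tdeg (f * \<epsilon>))))"
    using B1 by (intro lin_comb_diff) (auto elim: lin_comb_IJA_mono)
  moreover have "peval f x = peval (v * q - f * \<epsilon>) x" if x: "x \<in> X" for x
  proof -
    have "peval e x * peval q x = 1 + peval \<epsilon> x"
      using arg_cong[OF q, of "\<lambda>p. peval p x"] by (simp add: peval_mult peval_add)
    then have "peval f x = peval f x * (peval e x * peval q x) - peval f x * peval \<epsilon> x"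
      by (simp add: algebra_simps)
    also have "\<dots> = (peval e x * peval f x) * peval q x - peval f x * peval \<epsilon> x"
      by (simp add: mult_ac)
    also have "\<dots> = peval (v * q - f * \<epsilon>) x"
      using ev x by (simp add: peval_mult peval_diff)
    finally show ?thesis .
  qed
  ultimately show ?thesis
    using that unfolding span_on_def by blast
qed

lemma monomial_mult_mem_IJA:
  assumes i: "m + m \<le> Poly_Mapping.lookup b i" and deg: "tdeg f + mon_deg b \<le> B + (m + m)"
  shows "f * Poly_Mapping.single b c \<in> IJA B"
proof -
  let ?b' = "b - Poly_Mapping.single i (m + m)" and ?x = "Poly_Mapping.single (Poly_Mapping.single i m) (1::'k)"
  have b: "b = ?b' + Poly_Mapping.single i (m + m)"
    by (rule single_add_minus_single[OF i])
  have "Poly_Mapping.single i (m + m) = Poly_Mapping.single i m + Poly_Mapping.single i m"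
    by (simp add: single_add)
  then have "Poly_Mapping.single b c = ?x * ?x * Poly_Mapping.single ?b' c"
    using b by (simp add: mult_single add_ac)
  then have "f * Poly_Mapping.single b c = ?x * ?x * (f * Poly_Mapping.single ?b' c)"
    by (simp add: mult_ac)
  moreover have "mon_deg b = mon_deg ?b' + (m + m)"
    using b mon_deg_add[of ?b' "Poly_Mapping.single i (m + m)"] by (simp add: mon_deg_single)
  then have "f * Poly_Mapping.single ?b' c \<in> Apol B"
    using deg tdeg_mult_le_add[OF order_refl tdeg_single_le, of f ?b' c] by (simp add: Apol_iff)
  moreover have "?x \<in> Ipol I m" "?x \<in> Ipol J m"
    by (rule var_power_mem_Ipol[OF I rI rm], rule var_power_mem_Ipol[OF J rJ rm])
  ultimately show ?thesis
    unfolding IJA_def by (simp add: set_times_intro)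
qed

text \<open>Monomials of low degree are absorbed into A^(B); a monomial of high degree contains a variable
  x_i with exponent at least 2m, and x_i^m belongs to both I^(m) and J^(m).\<close>

lemma span_on_IJA_mult_Apol:
  assumes f: "f \<in> span_on X (IJA B0)" and tf: "tdeg f \<le> m + m"
    and B: "B0 + (m + m) * card (UNIV :: 'n set) \<le> B" and a: "a \<in> Apol B"
  shows "f * a \<in> span_on X (IJA B)"
proof -
  have "f * Poly_Mapping.single b (Poly_Mapping.lookup a b) \<in> span_on X (IJA B)"
    if b: "b \<in> Poly_Mapping.keys a" for b
  proof (cases "mon_deg b + B0 \<le> B")
    case True
    have "Poly_Mapping.single b (Poly_Mapping.lookup a b) \<in> lin_comb (Apol (mon_deg b))"
      by (intro lin_comb_base monomial_mem_Apol)
    with f have "f * Poly_Mapping.single b (Poly_Mapping.lookup a b)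
        \<in> span_on X (IJA B0 * Apol (mon_deg b))"
      by (rule span_on_mult)
    also have "\<dots> \<subseteq> span_on X (IJA B)"
      using True by (intro span_on_mono order_trans[OF IJA_times_Apol IJA_mono]) simp
    finally show ?thesis .
  next
    case False
    have "mon_deg b \<le> B"
      using b a mon_deg_le_tdeg[of b a] by (simp add: Apol_iff)
    then obtain i where "m + m \<le> Poly_Mapping.lookup b i"
      using False B exists_large_exponent[of "m + m" b] by fastforce
    moreover have "tdeg f + mon_deg b \<le> B + (m + m)"
      using tf \<open>mon_deg b \<le> B\<close> by simp
    ultimately show ?thesis
      using monomial_mult_mem_IJA lin_comb_subset_span_on lin_comb_base by blast
  qed
  moreover have "f * a = (\<Sum>b\<in>Poly_Mapping.keys a. f * Poly_Mapping.single b (Poly_Mapping.lookup a b))"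
    by (subst sum_single_lookup[of a]) (simp add: sum_distrib_left)
  ultimately show ?thesis
    by (simp add: span_on_sum)
qed

lemma lin_comb_times_Apol_subset_span_on_IJA:
  assumes F: "finite F" "\<forall>f\<in>F. f \<in> span_on X (IJA (Bf f)) \<and> tdeg f \<le> m + m"
    and B: "(\<Sum>f\<in>F. Bf f) + (m + m) * card (UNIV :: 'n set) \<le> B"
  shows "lin_comb F * Apol B \<subseteq> span_on X (IJA B)"
proof
  fix x assume "x \<in> lin_comb F * Apol B"
  then obtain p a where x: "x = p * a" "p \<in> lin_comb F" "a \<in> Apol B"
    by (rule set_times_elim)
  have "F * {a} \<subseteq> span_on X (IJA B)"
  proof
    fix y assume "y \<in> F * {a}"
    then obtain f where f: "y = f * a" "f \<in> F"
      by (auto elim: set_times_elim)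
    have "Bf f + (m + m) * card (UNIV :: 'n set) \<le> B"
      using member_le_sum[of f F Bf] f(2) F(1) B by simp
    then show "y \<in> span_on X (IJA B)"
      using f F(2) x(3) span_on_IJA_mult_Apol by blast
  qed
  moreover have "p * a \<in> lin_comb (F * {a})"
    using x(2) lin_comb_base[of a "{a}"] by (intro lin_comb_mult) auto
  ultimately show "x \<in> span_on X (IJA B)"
    using x(1) span_on_subset by blast
qed

lemma Ipol_ideal_prod_times_Apol:
  obtains B where "Ipol (ideal_prod X I J) (m + m) * Apol B \<subseteq> span_on X (IJA B)"
proof -
  let ?P = "Ipol (ideal_prod X I J) (m + m)"
  have "\<forall>p\<in>?P. tdeg p \<le> m + m"
    by (simp add: Ipol_iff)
  from lin_closed_bounded_finite_spanning_set[OF lin_closed_Ipol[OF loc_ideal_ideal_prod[OF I J]] this]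
  obtain F where F: "finite F" "F \<subseteq> ?P" "?P \<subseteq> lin_comb F"
    by (elim exE conjE)
  have "\<forall>f\<in>F. \<exists>B. f \<in> span_on X (IJA B)"
    using F(2) ideal_prod_mem_span_on_IJA by (metis Ipol_iff subsetD)
  then obtain Bf where Bf: "\<forall>f\<in>F. f \<in> span_on X (IJA (Bf f))"
    by metis
  let ?B = "(\<Sum>f\<in>F. Bf f) + (m + m) * card (UNIV :: 'n set)"
  have "?P * Apol ?B \<subseteq> lin_comb F * Apol ?B"
    using F(3) by (rule set_times_mono2) simp
  also have "\<dots> \<subseteq> span_on X (IJA ?B)"
    using F Bf by (intro lin_comb_times_Apol_subset_span_on_IJA) (auto simp: Ipol_iff)
  finally show ?thesis
    by (rule that)
qed

end

lemma GX_eq_Ipol_ideal_prod: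
  assumes X: "zclosed X" and I: "loc_ideal X I" and J: "loc_ideal X J"
    and rI: "ideal_pow X loc_max r \<subseteq> I" and rJ: "ideal_pow X loc_max r \<subseteq> J"
    and s: "ideal_pow X loc_max s \<subseteq> ideal_prod X I J" and rm: "r \<le> m" and sm: "s \<le> m"
  shows "GX_eq X (rsub_of_pols X (Ipol (ideal_prod X I J) m), rsub_of_pols X (Apol m))
                 (KX_mul X (rsub_of_pols X (Ipol I m)) (rsub_of_pols X (Ipol J m)),
                  KX_mul X (rsub_of_pols X (Apol m)) (rsub_of_pols X (Apol m)))"
proof -
  interpret primary_pair X I J r m
    using I J rI rJ rm by unfold_locales
  let ?IJ = "ideal_prod X I J"
  have IJ: "loc_ideal X ?IJ"
    using I J by (rule loc_ideal_ideal_prod)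
  obtain B where B: "Ipol ?IJ (m + m) * Apol B \<subseteq> span_on X (IJA B)"
    by (rule Ipol_ideal_prod_times_Apol)
  have "Ipol ?IJ m * (Apol m * Apol m) * Apol B = Ipol ?IJ m * Apol m * Apol B * Apol m"
    by (simp add: mult_ac)
  also have "\<dots> \<subseteq> Ipol ?IJ (m + m) * Apol B * Apol m"
    by (intro set_times_mono2 order_refl Ipol_times_Apol[OF IJ])
  also have "\<dots> \<subseteq> span_on X (IJA B * Apol m)"
    by (rule span_on_times_subset[OF B])
  also have "IJA B * Apol m = Ipol I m * Ipol J m * Apol m * Apol B"
    by (simp add: IJA_def mult_ac)
  finally have IJ_sub: "Ipol ?IJ m * (Apol m * Apol m) * Apol B
      \<subseteq> span_on X (Ipol I m * Ipol J m * Apol m * Apol B)" .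
  have "Ipol I m * Ipol J m \<subseteq> lin_comb (Ipol ?IJ m * Apol m)"
    using Ipol_times_Ipol Ipol_add_subset[OF IJ s sm] by (rule order_trans)
  then have "Ipol I m * Ipol J m * Apol m * Apol B \<subseteq> lin_comb (Ipol ?IJ m * Apol m * Apol m * Apol B)"
    by (intro lin_comb_times_subset)
  also have "\<dots> \<subseteq> span_on X (Ipol ?IJ m * Apol m * Apol m * Apol B)"
    by (rule lin_comb_subset_span_on)
  also have "Ipol ?IJ m * Apol m * Apol m * Apol B = Ipol ?IJ m * (Apol m * Apol m) * Apol B"
    by (simp add: mult.assoc)
  finally show ?thesis
    using GX_eq_rsub_of_pols[OF X KX_Apol[OF X] IJ_sub] by (simp add: KX_mul_rsub_of_pols[OF X])
qed
theorem theorem2p7: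
  fixes X :: "('n::finite \<Rightarrow> 'k::field) set" and n :: nat
  assumes "alg_closed_type TYPE('k)"
    and "affine_variety_equidim X n"
    and "n \<ge> 1"
    and "origin \<in> X"
  shows "(\<forall>I r m m'. m_primary X I \<longrightarrow> r > 0 \<longrightarrow> ideal_pow X loc_max r \<subseteq> I \<longrightarrow> r \<le> m \<longrightarrow> r \<le> m' \<longrightarrow>
            KX X (rsub_of_pols X (Ipol I m)) \<and> KX X (rsub_of_pols X (Apol m)) \<and>
            GX_eq X (rsub_of_pols X (Ipol I m), rsub_of_pols X (Apol m))
                    (rsub_of_pols X (Ipol I m'), rsub_of_pols X (Apol m')))
       \<and> (\<forall>I J r s m. m_primary X I \<longrightarrow> m_primary X J \<longrightarrow>
            r > 0 \<longrightarrow> ideal_pow X loc_max r \<subseteq> I \<longrightarrow> ideal_pow X loc_max r \<subseteq> J \<longrightarrow>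
            s > 0 \<longrightarrow> ideal_pow X loc_max s \<subseteq> ideal_prod X I J \<longrightarrow> r \<le> m \<longrightarrow> s \<le> m \<longrightarrow>
            GX_eq X (rsub_of_pols X (Ipol (ideal_prod X I J) m), rsub_of_pols X (Apol m))
                    (KX_mul X (rsub_of_pols X (Ipol I m)) (rsub_of_pols X (Ipol J m)),
                     KX_mul X (rsub_of_pols X (Apol m)) (rsub_of_pols X (Apol m))))"
proof -
  have X: "zclosed X"
    using assms(2) by (simp add: affine_variety_equidim_def)
  show ?thesis
  proof (intro conjI allI impI)
    fix I r m m'
    assume "m_primary X I" "ideal_pow X loc_max r \<subseteq> I" "r \<le> m" "r \<le> m'"
    then show "KX X (rsub_of_pols X (Ipol I m))" "KX X (rsub_of_pols X (Apol m))"
      "GX_eq X (rsub_of_pols X (Ipol I m), rsub_of_pols X (Apol m))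
               (rsub_of_pols X (Ipol I m'), rsub_of_pols X (Apol m'))"
      using KX_Ipol[OF assms(2,3)] KX_Apol[OF X] GX_eq_Ipol_Apol[OF X]
      by (simp_all add: m_primary_def)
  next
    fix I J r s m
    assume "m_primary X I" "m_primary X J"
      "ideal_pow X loc_max r \<subseteq> I" "ideal_pow X loc_max r \<subseteq> J"
      "ideal_pow X loc_max s \<subseteq> ideal_prod X I J" "r \<le> m" "s \<le> m"
    then show "GX_eq X (rsub_of_pols X (Ipol (ideal_prod X I J) m), rsub_of_pols X (Apol m))
                 (KX_mul X (rsub_of_pols X (Ipol I m)) (rsub_of_pols X (Ipol J m)),
                  KX_mul X (rsub_of_pols X (Apol m)) (rsub_of_pols X (Apol m)))"
      using GX_eq_Ipol_ideal_prod[OF X] by (simp add: m_primary_def)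
  qed
qed
end
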